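(* Let $\mathbb{U}$ be a Euclidean space, let $\mathcal{M}\subset\mathbb{U}$ be a $C^{(2)}$-smooth manifold around a point $u\in\mathcal{M}$, and let $v\in N_{\mathcal{M}}(u)$. Then the normal mapping $N_{\mathcal{M}}\colon\mathbb{U}\rightrightarrows\mathbb{U}$ satisfies the derivative-coderivative equality $$DN_{\mathcal{M}}(u\,|\,v)=D^*N_{\mathcal{M}}(u\,|\,v).$$
   Context: A $C^{(2)}$-manifold around $u$ is a set that near $u$ equals the common zero set of $C^{(2)}$ functions $h_1,\dots,h_m$ with linearly independent gradients at $u$. $N_{\mathcal{M}}$ is the set-valued mapping sending $x\in\mathcal{M}$ (near $u$) to the classical normal space $N_{\mathcal{M}}(x)$ and points outside $\mathcal{M}$ to the empty set. For a set-valued mapping $\Phi$ and $(x,y)\in\mathrm{gph}\,\Phi$, the graphical derivative is defined by $z\in D\Phi(x\,|\,y)(w)\iff(w,z)\in T_{\mathrm{gph}\,\Phi}(x,y)$ (tangent cone to the graph), and the coderivative by $z\in D^*\Phi(x\,|\,y)(w)\iff(z,-w)\in N_{\mathrm{gph}\,\Phi}(x,y)$ (limiting normal cone to the graph). *)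

theory Defs
  imports "HOL-Analysis.Analysis"
begin

definition graph_of :: "('a \<Rightarrow> 'b set) \<Rightarrow> ('a \<times> 'b) set" where
  "graph_of \<Phi> = {(x, y). y \<in> \<Phi> x}"

definition tangent_cone :: "'a::real_normed_vector set \<Rightarrow> 'a \<Rightarrow> 'a set" where
  "tangent_cone S x = {w. \<exists>t :: nat \<Rightarrow> real. \<exists>ws :: nat \<Rightarrow> 'a.
      (\<forall>k. 0 < t k) \<and> t \<longlonglongrightarrow> 0 \<and> ws \<longlonglongrightarrow> w \<and> (\<forall>k. x + t k *\<^sub>R ws k \<in> S)}"

definition regular_normal_cone :: "'a::real_inner set \<Rightarrow> 'a \<Rightarrow> 'a set" where
  "regular_normal_cone S x =
     (if x \<in> S then {v. \<forall>\<epsilon>>0. \<exists>\<delta>>0. \<forall>y\<in>S. norm (y - x) < \<delta> \<longrightarrow>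
                           inner v (y - x) \<le> \<epsilon> * norm (y - x)}
      else {})"

definition limiting_normal_cone :: "'a::real_inner set \<Rightarrow> 'a \<Rightarrow> 'a set" where
  "limiting_normal_cone S x =
     (if x \<in> S then {v. \<exists>xs :: nat \<Rightarrow> 'a. \<exists>vs :: nat \<Rightarrow> 'a.
          (\<forall>k. xs k \<in> S) \<and> xs \<longlonglongrightarrow> x \<and> vs \<longlonglongrightarrow> v \<and>
          (\<forall>k. vs k \<in> regular_normal_cone S (xs k))}
      else {})"

definition graphical_derivative ::
  "('a::real_normed_vector \<Rightarrow> 'b::real_normed_vector set) \<Rightarrow> 'a \<Rightarrow> 'b \<Rightarrow> 'a \<Rightarrow> 'b set" where
  "graphical_derivative \<Phi> x y w = {z. (w, z) \<in> tangent_cone (graph_of \<Phi>) (x, y)}"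

definition coderivative ::
  "('a::real_inner \<Rightarrow> 'b::real_inner set) \<Rightarrow> 'a \<Rightarrow> 'b \<Rightarrow> 'b \<Rightarrow> 'a set" where
  "coderivative \<Phi> x y w = {z. (z, - w) \<in> limiting_normal_cone (graph_of \<Phi>) (x, y)}"

text \<open>C^2 on the open set U: each h i has gradient g i x, the gradient map g i is differentiable
  with derivative H i x, and x \<mapsto> H i x is continuous (tested on each direction d,
  equivalent to operator-norm continuity in finite dimension).\<close>
definition C2_manifold_around :: "'a::euclidean_space set \<Rightarrow> 'a \<Rightarrow> bool" where
  "C2_manifold_around M u \<longleftrightarrow> u \<in> M \<and>
     (\<exists>U m (h :: nat \<Rightarrow> 'a \<Rightarrow> real) (g :: nat \<Rightarrow> 'a \<Rightarrow> 'a) (H :: nat \<Rightarrow> 'a \<Rightarrow> 'a \<Rightarrow> 'a).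
        open U \<and> u \<in> U \<and>
        (\<forall>i<m. \<forall>x\<in>U. (h i has_derivative (\<lambda>d. inner (g i x) d)) (at x) \<and>
                        (g i has_derivative H i x) (at x)) \<and>
        (\<forall>i<m. \<forall>d. continuous_on U (\<lambda>x. H i x d)) \<and>
        M \<inter> U = {x \<in> U. \<forall>i<m. h i x = 0} \<and>
        inj_on (\<lambda>i. g i u) {..<m} \<and> independent ((\<lambda>i. g i u) ` {..<m}))"

definition normal_map :: "'a::euclidean_space set \<Rightarrow> 'a \<Rightarrow> 'a set" where
  "normal_map M x = (if x \<in> M then {v. \<forall>w\<in>tangent_cone M x. inner v w = 0} else {})"

end

theory Submission
  imports Defs
begin

(* For x in M near u the tangent cone of M is the subspace T(x) orthogonal to all
   gradients (one inclusion from difference quotients of the h_i, the other from the open mapping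
   theorem applied to an auxiliary map with injective derivative), hence N_M(x) is the span of the
   gradients.  Writing y = sum c_i grad h_i(x), the tangent cone of gph N_M at (x, y) is the subspace
   of pairs (w, sum c_i Hess h_i(x) w + n) with w in T(x) and n in N_M(x).  As the Hessians are
   symmetric, its polar, the regular normal cone, consists of the (z, -w) with w in T(x) and
   z - sum c_i Hess h_i(x) w in N_M(x); this is the graphical derivative read off with the sign of
   w reversed.  The limiting normal cone adds nothing: the gradients stay uniformly independent near
   u, so the multipliers c depend continuously on the base point, and with the continuity of the
   Hessians limits of regular normals at nearby graph points obey the same description. *)

lemma has_derivative_difference_quotient_tendsto:
  fixes f :: "'a::real_normed_vector \<Rightarrow> 'b::real_normed_vector"
  assumes df: "(f has_derivative f') (at x)" and t_pos: "\<And>k. 0 < t k"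
    and t0: "t \<longlonglongrightarrow> 0" and ws: "ws \<longlonglongrightarrow> w"
  shows "(\<lambda>k. (f (x + t k *\<^sub>R ws k) - f x) /\<^sub>R t k) \<longlonglongrightarrow> f' w"
proof -
  have lin: "bounded_linear f'" using df by (rule has_derivative_bounded_linear)
  have "(\<lambda>k. (f (x + t k *\<^sub>R ws k) - f x) /\<^sub>R t k - f' (ws k)) \<longlonglongrightarrow> 0"
  proof (rule tendstoI)
    fix e :: real assume e: "0 < e"
    define B where "B = norm w + 1"
    have B: "0 < B" unfolding B_def by (simp add: add_nonneg_pos)
    obtain d where d: "d > 0"
      "\<And>y. norm (y - x) < d \<Longrightarrow> norm (f y - f x - f' (y - x)) \<le> e / B * norm (y - x)"
      using df e B unfolding has_derivative_at_alt by (meson divide_pos_pos)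
    have steps: "(\<lambda>k. t k *\<^sub>R ws k) \<longlonglongrightarrow> 0"
      using tendsto_scaleR[OF t0 ws] by simp
    have "eventually (\<lambda>k. norm (ws k) < B) sequentially"
      using tendsto_norm[OF ws] unfolding B_def by (simp add: order_tendstoD(2))
    moreover have "eventually (\<lambda>k. norm (t k *\<^sub>R ws k) < d) sequentially"
      using order_tendstoD(2)[OF tendsto_norm_zero[OF steps] d(1)] by simp
    ultimately show "eventually (\<lambda>k. dist ((f (x + t k *\<^sub>R ws k) - f x) /\<^sub>R t k - f' (ws k)) 0 < e)
      sequentially"
    proof eventually_elim
      case (elim k)
      have tk: "0 < t k" by (rule t_pos)
      have "(f (x + t k *\<^sub>R ws k) - f x) /\<^sub>R t k - f' (ws k)
          = inverse (t k) *\<^sub>R (f (x + t k *\<^sub>R ws k) - f x - f' (t k *\<^sub>R ws k))"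
        using tk by (simp add: linear_simps(5)[OF lin] scaleR_diff_right)
      then have "dist ((f (x + t k *\<^sub>R ws k) - f x) /\<^sub>R t k - f' (ws k)) 0
          = norm (f (x + t k *\<^sub>R ws k) - f x - f' (t k *\<^sub>R ws k)) / t k"
        using tk by (simp add: dist_norm divide_inverse_commute)
      also have "\<dots> \<le> e / B * norm (t k *\<^sub>R ws k) / t k"
        using d(2)[of "x + t k *\<^sub>R ws k"] elim tk by (intro divide_right_mono) auto
      also have "\<dots> = e / B * norm (ws k)" using tk by simp
      also have "\<dots> < e" using elim e B by (simp add: field_simps)
      finally show ?case .
    qed
  qed
  from tendsto_add[OF this bounded_linear.tendsto[OF lin ws]] show ?thesis by simp
qed

lemma regular_normal_cone_inner_tangent_nonpos:
  fixes S :: "'a::real_inner set"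
  assumes n: "n \<in> regular_normal_cone S x" and w: "w \<in> tangent_cone S x"
  shows "n \<bullet> w \<le> 0"
proof -
  have xS: "x \<in> S" using n unfolding regular_normal_cone_def by (auto split: if_splits)
  obtain t ws where t_pos: "\<And>k. 0 < t k" and t0: "t \<longlonglongrightarrow> 0" and ws: "ws \<longlonglongrightarrow> w"
    and in_S: "\<And>k. x + t k *\<^sub>R ws k \<in> S"
    using w unfolding tangent_cone_def by blast
  have steps: "(\<lambda>k. t k *\<^sub>R ws k) \<longlonglongrightarrow> 0"
    using tendsto_scaleR[OF t0 ws] by simp
  have approx: "n \<bullet> w \<le> e * norm w" if e: "e > 0" for e
  proof -
    obtain d where d: "d > 0"
      "\<And>y. y \<in> S \<Longrightarrow> norm (y - x) < d \<Longrightarrow> n \<bullet> (y - x) \<le> e * norm (y - x)"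
      using n e xS unfolding regular_normal_cone_def by auto
    have "eventually (\<lambda>k. norm (t k *\<^sub>R ws k) < d) sequentially"
      using order_tendstoD(2)[OF tendsto_norm_zero[OF steps] d(1)] by simp
    then have "eventually (\<lambda>k. n \<bullet> ws k \<le> e * norm (ws k)) sequentially"
    proof eventually_elim
      case (elim k)
      then have "t k * (n \<bullet> ws k) \<le> t k * (e * norm (ws k))"
        using d(2)[OF in_S[of k]] t_pos[of k] by (simp add: mult_ac)
      then show ?case using t_pos[of k] by simp
    qed
    then show ?thesis
      by (rule tendsto_le[OF trivial_limit_sequentially, rotated 2]) (intro tendsto_intros ws)+
  qed
  show ?thesis
  proof (rule field_le_epsilon)
    fix e :: real assume e: "0 < e"
    have "n \<bullet> w \<le> e / (norm w + 1) * norm w"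
      using approx[of "e / (norm w + 1)"] e by (simp add: add_nonneg_pos)
    also have "\<dots> = e * (norm w / (norm w + 1))" by simp
    also have "\<dots> \<le> e * 1" using e by (intro mult_left_mono) (auto simp: divide_le_eq_1 add_nonneg_pos)
    finally show "n \<bullet> w \<le> 0 + e" by simp
  qed
qed

lemma regular_normal_cone_subset_limiting:
  "regular_normal_cone S x \<subseteq> limiting_normal_cone S x"
proof
  fix n assume n: "n \<in> regular_normal_cone S x"
  then have "x \<in> S" unfolding regular_normal_cone_def by (auto split: if_splits)
  moreover have "\<exists>xs vs. (\<forall>k. xs k \<in> S) \<and> xs \<longlonglongrightarrow> x \<and> vs \<longlonglongrightarrow> n
      \<and> (\<forall>k. vs k \<in> regular_normal_cone S (xs k))"
    by (rule exI[of _ "\<lambda>k. x"], rule exI[of _ "\<lambda>k. n"]) (simp add: n \<open>x \<in> S\<close>)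
  ultimately show "n \<in> limiting_normal_cone S x"
    unfolding limiting_normal_cone_def by simp
qed

lemma tangent_cone_mono: "S \<subseteq> T \<Longrightarrow> tangent_cone S x \<subseteq> tangent_cone T x"
  unfolding tangent_cone_def by blast

lemma tangent_cone_secant_limit:
  fixes S :: "'a::euclidean_space set"
  assumes in_S: "\<And>k. y k \<in> S" and y: "y \<longlonglongrightarrow> x" and ne: "\<And>k. y k \<noteq> x"
  obtains r l where "strict_mono r" "l \<in> tangent_cone S x"
    "(\<lambda>k. (y (r k) - x) /\<^sub>R norm (y (r k) - x)) \<longlonglongrightarrow> l"
proof -
  define z where "z k = (y k - x) /\<^sub>R norm (y k - x)" for k
  have "bounded (range z)"
    using ne by (auto simp: bounded_iff z_def)
  then obtain r l where r: "strict_mono r" and zl: "(z \<circ> r) \<longlonglongrightarrow> l"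
    using bounded_imp_convergent_subsequence by blast
  have "(\<lambda>k. norm (y k - x)) \<longlonglongrightarrow> 0"
    using tendsto_norm_zero[OF LIM_zero[OF y]] .
  then have "(\<lambda>k. norm (y (r k) - x)) \<longlonglongrightarrow> 0"
    using LIMSEQ_subseq_LIMSEQ[OF _ r] by (auto simp: o_def)
  moreover have "x + norm (y (r k) - x) *\<^sub>R z (r k) = y (r k)" for k
    using ne[of "r k"] by (simp add: z_def)
  ultimately have "l \<in> tangent_cone S x"
    unfolding tangent_cone_def using ne in_S zl
    by (intro CollectI exI[of _ "\<lambda>k. norm (y (r k) - x)"] exI[of _ "z \<circ> r"]) auto
  with r zl show thesis by (intro that) (auto simp: z_def o_def)
qed

lemma regular_normal_coneI:
  fixes S :: "'a::euclidean_space set"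
  assumes xS: "x \<in> S" and polar: "\<And>w. w \<in> tangent_cone S x \<Longrightarrow> n \<bullet> w \<le> 0"
  shows "n \<in> regular_normal_cone S x"
proof (rule ccontr)
  assume "n \<notin> regular_normal_cone S x"
  then obtain e where e: "e > 0"
    and bad: "\<And>d. d > 0 \<Longrightarrow> \<exists>y\<in>S. norm (y - x) < d \<and> e * norm (y - x) < n \<bullet> (y - x)"
    using xS unfolding regular_normal_cone_def by (auto simp: not_le)
  obtain y where y: "\<And>k. y k \<in> S" "\<And>k. norm (y k - x) < 1 / Suc k"
    "\<And>k. e * norm (y k - x) < n \<bullet> (y k - x)"
    using bad[of "1 / Suc _"] by (metis of_nat_0_less_iff zero_less_Suc zero_less_divide_1_iff)
  have ne: "y k \<noteq> x" for k using y(3)[of k] by auto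
  have "(\<lambda>k. y k - x) \<longlonglongrightarrow> 0"
    by (intro Lim_null_comparison[OF _ LIMSEQ_Suc[OF lim_inverse_n']] always_eventually allI
        less_imp_le y(2))
  then have "y \<longlonglongrightarrow> x" by (rule LIM_zero_cancel)
  then obtain r l where "l \<in> tangent_cone S x"
    and l: "(\<lambda>k. (y (r k) - x) /\<^sub>R norm (y (r k) - x)) \<longlonglongrightarrow> l"
    using tangent_cone_secant_limit[where y = y, OF y(1) _ ne] by blast
  have "e \<le> n \<bullet> ((y k - x) /\<^sub>R norm (y k - x))" for k
  proof -
    have "0 < norm (y k - x)" using ne[of k] by simp
    then show ?thesis
      using y(3)[of k] by (simp add: pos_le_divide_eq less_imp_le flip: divide_inverse_commute)
  qed
  then have "e \<le> n \<bullet> l"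
    by (intro tendsto_le[OF trivial_limit_sequentially tendsto_inner[OF tendsto_const l]
        tendsto_const always_eventually] allI)
  with polar[OF \<open>l \<in> tangent_cone S x\<close>] e show False by simp
qed

lemma open_mapping_ray_sequence:
  fixes F :: "'a::euclidean_space \<Rightarrow> 'a"
  assumes U: "open U" "x \<in> U" and contF: "continuous_on U F"
    and dF: "(F has_derivative F') (at x)" and inj: "inj F'"
  obtains t p where "\<And>k. 0 < t k" "t \<longlonglongrightarrow> 0" "\<And>k. p k \<in> U" "p \<longlonglongrightarrow> x"
    "\<And>k. F (p k) = F x + t k *\<^sub>R b"
proof -
  have lin: "linear F'" using dF has_derivative_linear by blast
  obtain Fi where Fi: "linear Fi" "\<And>y. F' (Fi y) = y"
    using eucl.linear_injective_isomorphism[OF lin inj] by auto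
  have "\<exists>t p. 0 < t \<and> t \<le> 1 / Suc k \<and> p \<in> U \<and> norm (p - x) < 1 / Suc k
    \<and> F p = F x + t *\<^sub>R b" for k
  proof -
    have "F x \<in> interior (F ` (ball x (1 / Suc k) \<inter> U))"
      using Fi U by (intro sussmann_open_mapping[OF U(1) contF U(2) dF, of Fi])
        (auto simp: linear_conv_bounded_linear fun_eq_iff interior_open open_Int)
    then obtain \<delta> where \<delta>: "\<delta> > 0" "ball (F x) \<delta> \<subseteq> F ` (ball x (1 / Suc k) \<inter> U)"
      by (auto simp: mem_interior)
    define t where "t = min (1 / Suc k) (\<delta> / (norm b + 1))"
    have t: "0 < t" "t \<le> 1 / Suc k" using \<delta> by (auto simp: t_def add_nonneg_pos)
    have "norm (t *\<^sub>R b) = t * norm b" using t(1) by simp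
    also have "\<dots> \<le> \<delta> / (norm b + 1) * norm b"
      by (rule mult_right_mono) (simp_all add: t_def)
    also have "\<dots> = \<delta> * (norm b / (norm b + 1))" by simp
    also have "\<dots> < \<delta> * 1"
      using \<delta> by (intro mult_strict_left_mono) (auto simp: divide_less_eq_1 add_nonneg_pos)
    finally have "F x + t *\<^sub>R b \<in> F ` (ball x (1 / Suc k) \<inter> U)"
      using \<delta>(2) by (auto simp: dist_norm)
    then obtain p where "p \<in> ball x (1 / Suc k) \<inter> U" "F p = F x + t *\<^sub>R b"
      by (metis imageE)
    with t show ?thesis
      by (intro exI[of _ t] exI[of _ p]) (auto simp: dist_norm norm_minus_commute)
  qed
  then obtain t p where t: "\<And>k. 0 < t k" "\<And>k. t k \<le> 1 / Suc k"
    and p: "\<And>k. p k \<in> U" "\<And>k. norm (p k - x) < 1 / Suc k" "\<And>k. F (p k) = F x + t k *\<^sub>R b"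
    by metis
  have "t \<longlonglongrightarrow> 0"
    using t by (intro Lim_null_comparison[OF _ LIMSEQ_Suc[OF lim_inverse_n']] always_eventually)
      (simp add: less_imp_le)
  moreover have "(\<lambda>k. p k - x) \<longlonglongrightarrow> 0"
    using p(2) by (intro Lim_null_comparison[OF _ LIMSEQ_Suc[OF lim_inverse_n']] always_eventually)
      (simp add: less_imp_le)
  then have "p \<longlonglongrightarrow> x" by (rule LIM_zero_cancel)
  ultimately show thesis using that t(1) p(1,3) by blast
qed

lemma ray_preimage_difference_quotient_tendsto:
  assumes dF: "(F has_derivative F') (at x)" and c: "c > 0" "\<And>d. c * norm d \<le> norm (F' d)"
    and t_pos: "\<And>k. 0 < t k" and p: "p \<longlonglongrightarrow> x" and Fp: "\<And>k. F (p k) = F x + t k *\<^sub>R F' a"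
  shows "(\<lambda>k. (p k - x) /\<^sub>R t k) \<longlonglongrightarrow> a"
proof (rule tendstoI)
  fix \<epsilon> :: real assume \<epsilon>: "0 < \<epsilon>"
  have lin: "linear F'" using dF has_derivative_linear by blast
  define e where "e = min (c / 2) (c * \<epsilon> / (4 * (norm a + 1)))"
  have e: "0 < e" "e \<le> c / 2"
    using c \<epsilon> by (simp add: e_def add_nonneg_pos, simp only: e_def min.cobounded1)
  have "e * norm a \<le> c * \<epsilon> / (4 * (norm a + 1)) * norm a"
    unfolding e_def by (intro mult_right_mono min.cobounded2 norm_ge_zero)
  also have "\<dots> = c * \<epsilon> / 4 * (norm a / (norm a + 1))" by simp
  also have "\<dots> \<le> c * \<epsilon> / 4 * 1"
    using c \<epsilon> by (intro mult_left_mono) (auto simp: divide_le_eq_1 add_nonneg_pos)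
  also have "\<dots> < c / 2 * \<epsilon>" using c \<epsilon> by simp
  finally have ea: "e * norm a < c / 2 * \<epsilon>" .
  obtain d where d: "d > 0"
    "\<And>y. norm (y - x) < d \<Longrightarrow> norm (F y - F x - F' (y - x)) \<le> e * norm (y - x)"
    using dF e(1) unfolding has_derivative_at_alt by blast
  have "(\<lambda>k. norm (p k - x)) \<longlonglongrightarrow> 0" using tendsto_norm_zero[OF LIM_zero[OF p]] .
  from order_tendstoD(2)[OF this d(1)]
  show "eventually (\<lambda>k. dist ((p k - x) /\<^sub>R t k) a < \<epsilon>) sequentially"
  proof eventually_elim
    case (elim k)
    define w where "w = (p k - x) /\<^sub>R t k"
    define E where "E = F (p k) - F x - F' (p k - x)"
    have tk: "0 < t k" by (rule t_pos)
    have Fp': "F' (p k - x) = t k *\<^sub>R F' a - E" using Fp[of k] by (simp add: E_def)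
    have "F' (w - a) = F' (p k - x) /\<^sub>R t k - F' a"
      by (simp add: w_def linear_diff[OF lin] linear_scale[OF lin])
    also have "\<dots> = - (E /\<^sub>R t k)" unfolding Fp' using tk by (simp add: scaleR_diff_right)
    finally have "c * norm (w - a) \<le> norm E / t k"
      using c(2)[of "w - a"] tk by (simp add: divide_inverse_commute)
    also have "\<dots> \<le> e * norm (p k - x) / t k"
      using d(2)[OF elim] tk unfolding E_def by (simp add: divide_right_mono)
    also have "\<dots> = e * norm w"
    proof -
      have "norm w = inverse (t k) * norm (p k - x)" using tk by (simp add: w_def)
      then show ?thesis by (metis divide_inverse_commute times_divide_eq_right)
    qed
    also have "\<dots> \<le> e * (norm (w - a) + norm a)"
      using norm_triangle_sub[of w a] e(1) by (intro mult_left_mono) auto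
    finally have "(c - e) * norm (w - a) \<le> e * norm a" by (simp add: algebra_simps)
    moreover have "c / 2 * norm (w - a) \<le> (c - e) * norm (w - a)"
      using e(2) by (intro mult_right_mono) auto
    ultimately have "c / 2 * norm (w - a) < c / 2 * \<epsilon>" using ea by linarith
    then show ?case using c(1) by (simp add: dist_norm w_def)
  qed
qed

lemma tangent_cone_preimage_ray:
  fixes F :: "'a::euclidean_space \<Rightarrow> 'a"
  assumes U: "open U" "x \<in> U" and contF: "continuous_on U F"
    and dF: "(F has_derivative F') (at x)" and inj: "inj F'"
  shows "a \<in> tangent_cone {p \<in> U. \<exists>t. F p = F x + t *\<^sub>R F' a} x"
proof -
  have lin: "linear F'" using dF has_derivative_linear by blast
  obtain c where c: "c > 0" "\<And>d. c * norm d \<le> norm (F' d)"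
    using linear_inj_bounded_below_pos[OF lin inj] by blast
  obtain t p where t: "\<And>k. 0 < t k" "t \<longlonglongrightarrow> 0" and p: "\<And>k. p k \<in> U" "p \<longlonglongrightarrow> x"
    and Fp: "\<And>k. F (p k) = F x + t k *\<^sub>R F' a"
    using open_mapping_ray_sequence[OF U contF dF inj] by blast
  have "(\<lambda>k. (p k - x) /\<^sub>R t k) \<longlonglongrightarrow> a"
    by (rule ray_preimage_difference_quotient_tendsto[OF dF c t(1) p(2) Fp])
  moreover have "x + t k *\<^sub>R ((p k - x) /\<^sub>R t k) = p k" for k using t(1)[of k] by simp
  ultimately show ?thesis
    unfolding tangent_cone_def using t p(1) Fp
    by (intro CollectI exI[of _ t] exI[of _ "\<lambda>k. (p k - x) /\<^sub>R t k"]) auto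
qed

lemma in_span_iff_orthogonal_annihilator:
  fixes G :: "'a::euclidean_space set"
  shows "y \<in> span G \<longleftrightarrow> (\<forall>w. (\<forall>g\<in>G. g \<bullet> w = 0) \<longrightarrow> y \<bullet> w = 0)"
proof
  assume y: "y \<in> span G"
  show "\<forall>w. (\<forall>g\<in>G. g \<bullet> w = 0) \<longrightarrow> y \<bullet> w = 0"
  proof (intro allI impI)
    fix w assume "\<forall>g\<in>G. g \<bullet> w = 0"
    then have "orthogonal w y"
      using orthogonal_to_span[OF y, of w] by (simp add: orthogonal_def inner_commute)
    then show "y \<bullet> w = 0" by (simp add: orthogonal_def inner_commute)
  qed
next
  assume perp: "\<forall>w. (\<forall>g\<in>G. g \<bullet> w = 0) \<longrightarrow> y \<bullet> w = 0"
  obtain a z where a: "a \<in> span G" and z: "\<And>w. w \<in> span G \<Longrightarrow> orthogonal z w"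
    and y: "y = a + z"
    using orthogonal_subspace_decomp_exists[of G y] by blast
  have "\<forall>g\<in>G. g \<bullet> z = 0"
    using z[OF span_base] by (auto simp: orthogonal_def inner_commute)
  then have "y \<bullet> z = 0" using perp by blast
  moreover have "a \<bullet> z = 0" using z[OF a] by (simp add: orthogonal_def inner_commute)
  ultimately have "z \<bullet> z = 0" by (simp add: y inner_add_left)
  then show "y \<in> span G" using a y by simp
qed

lemma orthogonal_projection_exists:
  fixes S :: "'a::euclidean_space set"
  obtains P where "linear P" "\<And>d. P d \<in> span S" "\<And>d y. y \<in> span S \<Longrightarrow> y \<bullet> (d - P d) = 0"
    "\<And>d. (\<And>y. y \<in> S \<Longrightarrow> y \<bullet> d = 0) \<Longrightarrow> P d = 0"
proof -
  obtain B where B: "B \<subseteq> span S" "pairwise orthogonal B" "\<And>b. b \<in> B \<Longrightarrow> norm b = 1"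
    "independent B" "card B = dim (span S)" "span B = span S"
    using orthonormal_basis_subspace[OF subspace_span[of S]] by blast
  have fin: "finite B" using B(4) independent_imp_finite by blast
  define P where "P d = (\<Sum>b\<in>B. (b \<bullet> d) *\<^sub>R b)" for d
  have "linear P"
    unfolding P_def by (intro linearI)
      (simp_all add: inner_add_right scaleR_add_left sum.distrib scaleR_sum_right)
  moreover have "P d \<in> span S" for d
    unfolding P_def using B(1) by (intro span_sum span_scale) auto
  moreover have "y \<bullet> (d - P d) = 0" if y: "y \<in> span S" for d y
  proof -
    have "b \<bullet> (d - P d) = 0" if b: "b \<in> B" for b
    proof -
      have "b \<bullet> P d = (\<Sum>b'\<in>B. if b' = b then b \<bullet> d else 0)"
        unfolding P_def inner_sum_right
      proof (intro sum.cong refl)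
        fix b' assume "b' \<in> B"
        then show "b \<bullet> (b' \<bullet> d) *\<^sub>R b' = (if b' = b then b \<bullet> d else 0)"
          using B(2,3) b by (auto simp: pairwise_def orthogonal_def norm_eq_1)
      qed
      then show ?thesis using fin b by (simp add: inner_diff_right)
    qed
    then show ?thesis
      using orthogonal_to_span[of y B "d - P d"] y B(6)
      by (simp add: orthogonal_def inner_commute)
  qed
  moreover have "P d = 0" if "\<And>y. y \<in> S \<Longrightarrow> y \<bullet> d = 0" for d
  proof -
    have "b \<bullet> d = 0" if "b \<in> B" for b
    proof -
      have "b \<in> span S" using B(1) that by blast
      then have "\<forall>w. (\<forall>g\<in>S. g \<bullet> w = 0) \<longrightarrow> b \<bullet> w = 0"
        by (simp only: in_span_iff_orthogonal_annihilator)
      then show ?thesis using \<open>\<And>y. y \<in> S \<Longrightarrow> y \<bullet> d = 0\<close> by auto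
    qed
    then show ?thesis unfolding P_def by (intro sum.neutral) simp
  qed
  ultimately show thesis by (rule that)
qed

lemma inj_gram_plus_orthogonal_part:
  fixes v :: "nat \<Rightarrow> 'a::euclidean_space"
  assumes P: "linear P" "\<And>d. P d \<in> span (v ` {..<m})"
    "\<And>d y. y \<in> span (v ` {..<m}) \<Longrightarrow> y \<bullet> (d - P d) = 0"
  shows "inj (\<lambda>d. (\<Sum>i<m. (v i \<bullet> d) *\<^sub>R v i) + (d - P d))"
proof -
  have lin: "linear (\<lambda>d. (\<Sum>i<m. (v i \<bullet> d) *\<^sub>R v i) + (d - P d))"
    unfolding linear_iff
    by (simp add: linear_add[OF P(1)] linear_scale[OF P(1)] inner_add_right scaleR_add_left
        sum.distrib scaleR_sum_right algebra_simps)
  have "d = 0" if d: "(\<Sum>i<m. (v i \<bullet> d) *\<^sub>R v i) + (d - P d) = 0" for d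
  proof -
    define s where "s = (\<Sum>i<m. (v i \<bullet> d) *\<^sub>R v i)"
    have s_span: "s \<in> span (v ` {..<m})"
      unfolding s_def by (intro span_sum span_scale span_base) auto
    have sum_eq: "s + (d - P d) = 0" using d unfolding s_def .
    have "s \<bullet> s = s \<bullet> (s + (d - P d))" using P(3)[OF s_span] by (simp add: inner_add_right)
    then have s0: "s = 0" unfolding sum_eq by simp
    have "(\<Sum>i<m. (v i \<bullet> d)\<^sup>2) = s \<bullet> d"
      by (simp add: s_def inner_sum_left power2_eq_square)
    then have "\<forall>i\<in>{..<m}. (v i \<bullet> d)\<^sup>2 = 0"
      using s0 by (simp add: sum_nonneg_eq_0_iff)
    then have perp: "\<forall>g\<in>v ` {..<m}. g \<bullet> d = 0" by simp
    have "\<forall>w. (\<forall>g\<in>v ` {..<m}. g \<bullet> w = 0) \<longrightarrow> P d \<bullet> w = 0"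
      using P(2)[of d] by (simp only: in_span_iff_orthogonal_annihilator)
    then have Pd: "P d \<bullet> d = 0" using perp by blast
    have "d - P d = 0" using sum_eq unfolding s0 by (simp only: add_0_left)
    then have "d = P d" by (rule right_minus_eq[THEN iffD1])
    then have "d \<bullet> d = 0" using Pd by (metis (no_types))
    then show "d = 0" by simp
  qed
  then show ?thesis using linear_injective_0[OF lin] by blast
qed

lemma independent_dual_functionals:
  fixes v :: "nat \<Rightarrow> 'a::euclidean_space"
  assumes inj: "inj_on v {..<m}" and indep: "independent (v ` {..<m})"
  obtains l :: "nat \<Rightarrow> 'a \<Rightarrow> real" where "\<And>j. j < m \<Longrightarrow> linear (l j)"
    "\<And>i j. i < m \<Longrightarrow> j < m \<Longrightarrow> l j (v i) = (if i = j then 1 else 0)"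
proof -
  have "\<forall>j\<in>{..<m}. \<exists>l. linear l \<and> (\<forall>i<m. l (v i) = (if i = j then 1 else (0::real)))"
  proof
    fix j assume j: "j \<in> {..<m}"
    obtain l :: "'a \<Rightarrow> real" where "linear l"
      "\<forall>y\<in>v ` {..<m}. l y = (if y = v j then 1 else 0)"
      using linear_independent_extend[OF indep, of "\<lambda>y. if y = v j then 1 else 0"] by blast
    moreover have "v i = v j \<longleftrightarrow> i = j" if "i < m" for i
      using inj_onD[OF inj] that j by auto
    ultimately show "\<exists>l. linear l \<and> (\<forall>i<m. l (v i) = (if i = j then 1 else (0::real)))"
      by auto
  qed
  from bchoice[OF this] obtain l
    where "\<forall>j\<in>{..<m}. linear (l j) \<and> (\<forall>i<m. l j (v i) = (if i = j then 1 else (0::real)))"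
    by blast
  then show thesis by (intro that[of l]) auto
qed

lemma independent_coefficients_bound:
  fixes v :: "nat \<Rightarrow> 'a::euclidean_space"
  assumes inj: "inj_on v {..<m}" and indep: "independent (v ` {..<m})"
  obtains B where "B > 0" "\<And>c. (\<Sum>i<m. \<bar>c i\<bar>) \<le> B * norm (\<Sum>i<m. c i *\<^sub>R v i)"
proof -
  obtain l where lin: "\<And>j. j < m \<Longrightarrow> linear (l j)"
    and dual: "\<And>i j. i < m \<Longrightarrow> j < m \<Longrightarrow> l j (v i) = (if i = j then 1 else (0::real))"
    using independent_dual_functionals[OF inj indep] by blast
  define B where "B = (\<Sum>j<m. onorm (l j)) + 1"
  have "0 \<le> (\<Sum>j<m. onorm (l j))"
    using lin by (intro sum_nonneg) (simp add: onorm_pos_le linear_conv_bounded_linear)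
  then have B: "B > 0" unfolding B_def by linarith
  have "(\<Sum>j<m. \<bar>c j\<bar>) \<le> B * norm (\<Sum>i<m. c i *\<^sub>R v i)" for c
  proof -
    let ?y = "\<Sum>i<m. c i *\<^sub>R v i"
    have "\<bar>c j\<bar> \<le> onorm (l j) * norm ?y" if j: "j \<in> {..<m}" for j
    proof -
      have "l j ?y = (\<Sum>i<m. c i * l j (v i))"
        using lin j by (simp add: linear_sum linear_scale)
      also have "\<dots> = (\<Sum>i<m. if i = j then c i else 0)"
        using dual j by (intro sum.cong) auto
      also have "\<dots> = c j" using j by simp
      finally show ?thesis
        using onorm[of "l j" ?y] lin j by (simp add: linear_conv_bounded_linear)
    qed
    then have "(\<Sum>j<m. \<bar>c j\<bar>) \<le> (\<Sum>j<m. onorm (l j) * norm ?y)" by (rule sum_mono)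
    also have "\<dots> = (\<Sum>j<m. onorm (l j)) * norm ?y" by (rule sum_distrib_right[symmetric])
    also have "\<dots> \<le> B * norm ?y" unfolding B_def by (simp add: algebra_simps)
    finally show ?thesis .
  qed
  with B show thesis by (rule that)
qed

lemma independent_coefficients_bound_near:
  fixes g :: "nat \<Rightarrow> 'a::metric_space \<Rightarrow> 'b::euclidean_space"
  assumes inj: "inj_on (\<lambda>i. g i u) {..<m}" and indep: "independent ((\<lambda>i. g i u) ` {..<m})"
    and cont: "\<And>i. i < m \<Longrightarrow> isCont (g i) u"
  obtains r C where "r > 0" "C > 0"
    "\<And>x c. x \<in> ball u r \<Longrightarrow> (\<Sum>i<m. \<bar>c i\<bar>) \<le> C * norm (\<Sum>i<m. c i *\<^sub>R g i x)"
proof -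
  obtain B where B: "B > 0" "\<And>c. (\<Sum>i<m. \<bar>c i\<bar>) \<le> B * norm (\<Sum>i<m. c i *\<^sub>R g i u)"
    using independent_coefficients_bound[OF inj indep] by blast
  define \<eta> where "\<eta> = 1 / (2 * B)"
  have \<eta>: "\<eta> > 0" using B by (simp add: \<eta>_def)
  have "\<forall>i\<in>{..<m}. eventually (\<lambda>x. dist (g i x) (g i u) < \<eta>) (at u)"
    using cont \<eta> by (auto simp: isCont_def tendsto_iff)
  then have "eventually (\<lambda>x. \<forall>i\<in>{..<m}. dist (g i x) (g i u) < \<eta>) (at u)"
    by (simp add: eventually_ball_finite_distrib)
  then obtain r where r: "r > 0"
    and near0: "\<And>x. x \<noteq> u \<Longrightarrow> dist x u < r \<Longrightarrow> \<forall>i\<in>{..<m}. dist (g i x) (g i u) < \<eta>"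
    unfolding eventually_at by blast
  have near: "\<forall>i<m. norm (g i u - g i x) \<le> \<eta>" if "x \<in> ball u r" for x
    using near0[of x] that \<eta> by (cases "x = u") (auto simp: dist_commute dist_norm less_imp_le)
  have "(\<Sum>i<m. \<bar>c i\<bar>) \<le> 2 * B * norm (\<Sum>i<m. c i *\<^sub>R g i x)" if x: "x \<in> ball u r" for x c
  proof -
    let ?s = "\<Sum>i<m. \<bar>c i\<bar>"
    let ?Su = "\<Sum>i<m. c i *\<^sub>R g i u" and ?Sx = "\<Sum>i<m. c i *\<^sub>R g i x"
    have "norm (?Su - ?Sx) = norm (\<Sum>i<m. c i *\<^sub>R (g i u - g i x))"
      by (simp add: sum_subtractf scaleR_diff_right)
    also have "\<dots> \<le> (\<Sum>i<m. \<bar>c i\<bar> * \<eta>)"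
      using near[OF x] by (intro order_trans[OF norm_sum] sum_mono) (auto intro: mult_left_mono)
    also have "\<dots> = ?s * \<eta>" by (rule sum_distrib_right[symmetric])
    finally have "norm ?Su \<le> norm ?Sx + ?s * \<eta>"
      using norm_triangle_sub[of ?Su ?Sx] by linarith
    then have "?s \<le> B * (norm ?Sx + ?s * \<eta>)"
      using B by (intro order_trans[OF B(2)] mult_left_mono) auto
    also have "\<dots> = B * norm ?Sx + ?s / 2" using B by (simp add: \<eta>_def field_simps)
    finally show ?thesis by simp
  qed
  moreover have "2 * B > 0" using B by simp
  ultimately show thesis using r that by blast
qed

lemma has_real_derivative_along_line:
  fixes f :: "'a::real_inner \<Rightarrow> real"
  assumes "(f has_derivative (\<lambda>d. g (p + s *\<^sub>R a) \<bullet> d)) (at (p + s *\<^sub>R a))"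
  shows "((\<lambda>s. f (p + s *\<^sub>R a)) has_real_derivative g (p + s *\<^sub>R a) \<bullet> a) (at s)"
proof -
  have "((\<lambda>s. p + s *\<^sub>R a) has_derivative (\<lambda>h. h *\<^sub>R a)) (at s)"
    by (auto intro!: derivative_eq_intros)
  from has_derivative_compose[OF this assms]
  have "((\<lambda>s. f (p + s *\<^sub>R a)) has_derivative (\<lambda>h. g (p + s *\<^sub>R a) \<bullet> (h *\<^sub>R a))) (at s)"
    by (simp add: o_def)
  moreover have "(\<lambda>h. g (p + s *\<^sub>R a) \<bullet> (h *\<^sub>R a)) = (*) (g (p + s *\<^sub>R a) \<bullet> a)"
    by (auto simp: mult.commute)
  ultimately show ?thesis by (simp add: has_field_derivative_def)
qed

lemma second_difference_mean_value:
  fixes f :: "'a::real_inner \<Rightarrow> real"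
  assumes df: "\<And>y. y \<in> U \<Longrightarrow> (f has_derivative (\<lambda>d. g y \<bullet> d)) (at y)"
    and t: "0 < t" and segments: "\<And>s. 0 \<le> s \<Longrightarrow> s \<le> t \<Longrightarrow> x + s *\<^sub>R a \<in> U \<and> x + t *\<^sub>R b + s *\<^sub>R a \<in> U"
  obtains \<xi> where "0 < \<xi>" "\<xi> < t"
    "f (x + t *\<^sub>R a + t *\<^sub>R b) - f (x + t *\<^sub>R a) - f (x + t *\<^sub>R b) + f x
       = t * ((g (x + t *\<^sub>R b + \<xi> *\<^sub>R a) - g (x + \<xi> *\<^sub>R a)) \<bullet> a)"
proof -
  define \<psi> where "\<psi> s = f (x + t *\<^sub>R b + s *\<^sub>R a) - f (x + s *\<^sub>R a)" for s
  define \<psi>' where "\<psi>' s = (g (x + t *\<^sub>R b + s *\<^sub>R a) - g (x + s *\<^sub>R a)) \<bullet> a" for s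
  have "(\<psi> has_real_derivative \<psi>' s) (at s)" if "0 \<le> s" "s \<le> t" for s
  proof -
    have "((\<lambda>s. f (x + t *\<^sub>R b + s *\<^sub>R a)) has_real_derivative g (x + t *\<^sub>R b + s *\<^sub>R a) \<bullet> a) (at s)"
      using segments[OF that] by (intro has_real_derivative_along_line[where g = g] df) simp
    moreover have "((\<lambda>s. f (x + s *\<^sub>R a)) has_real_derivative g (x + s *\<^sub>R a) \<bullet> a) (at s)"
      using segments[OF that] by (intro has_real_derivative_along_line[where g = g] df) simp
    ultimately show ?thesis
      unfolding \<psi>_def[abs_def] \<psi>'_def inner_diff_left by (rule DERIV_diff)
  qed
  then obtain \<xi> where "0 < \<xi>" "\<xi> < t" "\<psi> t - \<psi> 0 = (t - 0) * \<psi>' \<xi>"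
    using MVT2[OF t, of \<psi> \<psi>'] by blast
  moreover have "\<psi> t - \<psi> 0 = f (x + t *\<^sub>R a + t *\<^sub>R b) - f (x + t *\<^sub>R a) - f (x + t *\<^sub>R b) + f x"
    by (simp add: \<psi>_def add.commute add.left_commute)
  ultimately show thesis by (intro that) (simp_all add: \<psi>'_def)
qed

lemma has_derivative_two_point_estimate:
  assumes dg: "(g has_derivative G) (at x)" and e: "e > 0"
  obtains d where "d > 0" "\<And>y z. norm (y - x) < d \<Longrightarrow> norm (z - x) < d \<Longrightarrow>
    norm (g y - g z - G (y - z)) \<le> e * (norm (y - x) + norm (z - x))"
proof -
  have lin: "linear G" using dg has_derivative_linear by blast
  obtain d where d: "d > 0"
    "\<And>y. norm (y - x) < d \<Longrightarrow> norm (g y - g x - G (y - x)) \<le> e * norm (y - x)"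
    using dg e unfolding has_derivative_at_alt by blast
  have "norm (g y - g z - G (y - z)) \<le> e * (norm (y - x) + norm (z - x))"
    if "norm (y - x) < d" "norm (z - x) < d" for y z
  proof -
    have eq: "g y - g z - G (y - z) = (g y - g x - G (y - x)) - (g z - g x - G (z - x))"
      using linear_diff[OF lin, of "y - x" "z - x"] by (simp add: algebra_simps)
    have "norm (g y - g z - G (y - z))
        \<le> norm (g y - g x - G (y - x)) + norm (g z - g x - G (z - x))"
      unfolding eq by (rule norm_triangle_ineq4)
    also have "\<dots> \<le> e * norm (y - x) + e * norm (z - x)"
      using d(2)[OF that(1)] d(2)[OF that(2)] by (rule add_mono)
    finally show ?thesis by (simp add: distrib_left)
  qed
  with d(1) show thesis by (rule that)
qed

lemma segment_norms_le:
  assumes "0 \<le> s" "s \<le> t"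
  shows "norm (s *\<^sub>R a) \<le> t * (norm a + norm b + 1)"
    "norm (t *\<^sub>R b + s *\<^sub>R a) \<le> t * (norm a + norm b + 1)"
proof -
  have "s * norm a \<le> t * norm a" "0 \<le> t * norm b" using assms by (auto intro: mult_right_mono)
  moreover have "norm (t *\<^sub>R b + s *\<^sub>R a) \<le> t * norm b + s * norm a"
    using norm_triangle_ineq[of "t *\<^sub>R b" "s *\<^sub>R a"] assms by simp
  moreover have "t * (norm a + norm b + 1) = t * norm a + t * norm b + t" by (simp add: algebra_simps)
  moreover have "norm (s *\<^sub>R a) = s * norm a" using assms by simp
  ultimately show "norm (s *\<^sub>R a) \<le> t * (norm a + norm b + 1)"
    "norm (t *\<^sub>R b + s *\<^sub>R a) \<le> t * (norm a + norm b + 1)"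
    using assms by linarith+
qed

lemma second_difference_bound:
  fixes f :: "'a::real_inner \<Rightarrow> real"
  assumes df: "\<And>y. y \<in> U \<Longrightarrow> (f has_derivative (\<lambda>d. g y \<bullet> d)) (at y)" and lin: "linear G"
    and U: "ball x \<delta> \<subseteq> U" and t: "0 < t" "t * (norm a + norm b + 1) < \<delta>" and \<epsilon>: "0 \<le> \<epsilon>"
    and dg: "\<And>y z. norm (y - x) < \<delta> \<Longrightarrow> norm (z - x) < \<delta> \<Longrightarrow>
      norm (g y - g z - G (y - z)) \<le> \<epsilon> * (norm (y - x) + norm (z - x))"
  shows "\<bar>f (x + t *\<^sub>R a + t *\<^sub>R b) - f (x + t *\<^sub>R a) - f (x + t *\<^sub>R b) + f x - t\<^sup>2 * (G b \<bullet> a)\<bar>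
    \<le> 2 * \<epsilon> * (norm a + norm b + 1)\<^sup>2 * t\<^sup>2"
proof -
  define N where "N = norm a + norm b + 1"
  have near: "norm (x + s *\<^sub>R a - x) \<le> t * N" "norm (x + t *\<^sub>R b + s *\<^sub>R a - x) \<le> t * N"
    if "0 \<le> s" "s \<le> t" for s
    using segment_norms_le[OF that, where a = a and b = b] by (simp_all add: N_def add.assoc)
  have tN: "t * N < \<delta>" using t(2) by (simp add: N_def)
  have "x + s *\<^sub>R a \<in> U \<and> x + t *\<^sub>R b + s *\<^sub>R a \<in> U" if "0 \<le> s" "s \<le> t" for s
  proof -
    have dist_eq: "dist x y = norm (y - x)" for y by (simp add: dist_norm norm_minus_commute)
    have "x + s *\<^sub>R a \<in> ball x \<delta>" "x + t *\<^sub>R b + s *\<^sub>R a \<in> ball x \<delta>"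
      unfolding mem_ball dist_eq using near[OF that] tN by linarith+
    then show ?thesis using U by auto
  qed
  then obtain \<xi> where \<xi>: "0 < \<xi>" "\<xi> < t"
    and mvt: "f (x + t *\<^sub>R a + t *\<^sub>R b) - f (x + t *\<^sub>R a) - f (x + t *\<^sub>R b) + f x
      = t * ((g (x + t *\<^sub>R b + \<xi> *\<^sub>R a) - g (x + \<xi> *\<^sub>R a)) \<bullet> a)"
    using second_difference_mean_value[OF df t(1)] by metis
  let ?y = "x + t *\<^sub>R b + \<xi> *\<^sub>R a" and ?z = "x + \<xi> *\<^sub>R a"
  have "G (?y - ?z) = t *\<^sub>R G b" by (simp add: linear_scale[OF lin])
  then have "t * ((g ?y - g ?z) \<bullet> a) - t\<^sup>2 * (G b \<bullet> a) = t * ((g ?y - g ?z - G (?y - ?z)) \<bullet> a)"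
    by (simp add: power2_eq_square inner_diff_left algebra_simps)
  then have "\<bar>f (x + t *\<^sub>R a + t *\<^sub>R b) - f (x + t *\<^sub>R a) - f (x + t *\<^sub>R b) + f x - t\<^sup>2 * (G b \<bullet> a)\<bar>
      = t * \<bar>(g ?y - g ?z - G (?y - ?z)) \<bullet> a\<bar>"
    using t unfolding mvt by (simp add: abs_mult)
  also have "\<dots> \<le> t * (norm (g ?y - g ?z - G (?y - ?z)) * norm a)"
    using t by (intro mult_left_mono Cauchy_Schwarz_ineq2) auto
  also have "\<dots> \<le> t * (\<epsilon> * (t * N + t * N) * N)"
  proof (intro mult_left_mono mult_mono)
    have "norm (g ?y - g ?z - G (?y - ?z)) \<le> \<epsilon> * (norm (?y - x) + norm (?z - x))"
      using near[of \<xi>] \<xi> tN by (intro dg) auto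
    also have "\<dots> \<le> \<epsilon> * (t * N + t * N)"
      using near[of \<xi>] \<xi> \<epsilon> by (intro mult_left_mono add_mono) auto
    finally show "norm (g ?y - g ?z - G (?y - ?z)) \<le> \<epsilon> * (t * N + t * N)" .
  qed (use t \<epsilon> in \<open>auto simp: N_def\<close>)
  also have "\<dots> = 2 * \<epsilon> * N\<^sup>2 * t\<^sup>2" by (simp add: power2_eq_square algebra_simps)
  finally show ?thesis unfolding N_def .
qed

lemma second_difference_estimate:
  fixes f :: "'a::real_inner \<Rightarrow> real"
  assumes U: "open U" "x \<in> U" and df: "\<And>y. y \<in> U \<Longrightarrow> (f has_derivative (\<lambda>d. g y \<bullet> d)) (at y)"
    and dg: "(g has_derivative G) (at x)" and e: "e > 0"
  obtains \<tau> where "\<tau> > 0" "\<And>t. 0 < t \<Longrightarrow> t < \<tau> \<Longrightarrow>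
    \<bar>f (x + t *\<^sub>R a + t *\<^sub>R b) - f (x + t *\<^sub>R a) - f (x + t *\<^sub>R b) + f x - t\<^sup>2 * (G b \<bullet> a)\<bar>
      \<le> e * t\<^sup>2"
proof -
  define N where "N = norm a + norm b + 1"
  have N: "N > 0" unfolding N_def by (simp add: add_nonneg_pos)
  obtain \<rho> where \<rho>: "\<rho> > 0" "ball x \<rho> \<subseteq> U" using U open_contains_ball by blast
  obtain d where d: "d > 0" "\<And>y z. norm (y - x) < d \<Longrightarrow> norm (z - x) < d \<Longrightarrow>
      norm (g y - g z - G (y - z)) \<le> e / (2 * N\<^sup>2) * (norm (y - x) + norm (z - x))"
    using has_derivative_two_point_estimate[OF dg, of "e / (2 * N\<^sup>2)"] e N by auto
  have lin: "linear G" using dg has_derivative_linear by blast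
  show thesis
  proof (rule that)
    show "min \<rho> d / N > 0" using \<rho> d N by simp
    fix t assume t: "0 < t" "t < min \<rho> d / N"
    then have tN: "t * (norm a + norm b + 1) < min \<rho> d"
      using N by (simp add: pos_less_divide_eq N_def)
    have "\<bar>f (x + t *\<^sub>R a + t *\<^sub>R b) - f (x + t *\<^sub>R a) - f (x + t *\<^sub>R b) + f x - t\<^sup>2 * (G b \<bullet> a)\<bar>
        \<le> 2 * (e / (2 * N\<^sup>2)) * N\<^sup>2 * t\<^sup>2"
      unfolding N_def
    proof (rule second_difference_bound[OF df lin _ t(1) tN])
      show "ball x (min \<rho> d) \<subseteq> U" using \<rho>(2) by auto
      show "0 \<le> e / (2 * (norm a + norm b + 1)\<^sup>2)" using e by simp
      show "norm (g y - g z - G (y - z))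
          \<le> e / (2 * (norm a + norm b + 1)\<^sup>2) * (norm (y - x) + norm (z - x))"
        if "norm (y - x) < min \<rho> d" "norm (z - x) < min \<rho> d" for y z
        using d(2)[unfolded N_def] that by simp
    qed
    also have "\<dots> = e * t\<^sup>2" using N by simp
    finally show "\<bar>f (x + t *\<^sub>R a + t *\<^sub>R b) - f (x + t *\<^sub>R a) - f (x + t *\<^sub>R b) + f x
      - t\<^sup>2 * (G b \<bullet> a)\<bar> \<le> e * t\<^sup>2" .
  qed
qed

lemma gradient_derivative_symmetric:
  fixes f :: "'a::real_inner \<Rightarrow> real"
  assumes U: "open U" "x \<in> U" and df: "\<And>y. y \<in> U \<Longrightarrow> (f has_derivative (\<lambda>d. g y \<bullet> d)) (at y)"
    and dg: "(g has_derivative G) (at x)"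
  shows "G b \<bullet> a = G a \<bullet> b"
proof -
  \<comment> \<open>The second difference approximates both t^2 (G b \<bullet> a) and, with a and b exchanged,
    t^2 (G a \<bullet> b), but it is itself symmetric in a and b.\<close>
  have "\<bar>G b \<bullet> a - G a \<bullet> b\<bar> \<le> 0 + e" if e: "e > 0" for e
  proof -
    obtain \<tau>1 where \<tau>1: "\<tau>1 > 0" "\<And>t. 0 < t \<Longrightarrow> t < \<tau>1 \<Longrightarrow>
      \<bar>f (x + t *\<^sub>R a + t *\<^sub>R b) - f (x + t *\<^sub>R a) - f (x + t *\<^sub>R b) + f x - t\<^sup>2 * (G b \<bullet> a)\<bar>
        \<le> e / 2 * t\<^sup>2"
      using second_difference_estimate[OF U df dg, of "e / 2" a b] e by auto
    obtain \<tau>2 where \<tau>2: "\<tau>2 > 0" "\<And>t. 0 < t \<Longrightarrow> t < \<tau>2 \<Longrightarrow>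
      \<bar>f (x + t *\<^sub>R b + t *\<^sub>R a) - f (x + t *\<^sub>R b) - f (x + t *\<^sub>R a) + f x - t\<^sup>2 * (G a \<bullet> b)\<bar>
        \<le> e / 2 * t\<^sup>2"
      using second_difference_estimate[OF U df dg, of "e / 2" b a] e by auto
    define t where "t = min \<tau>1 \<tau>2 / 2"
    have t: "0 < t" "t < \<tau>1" "t < \<tau>2" using \<tau>1 \<tau>2 by (auto simp: t_def)
    have comm: "x + t *\<^sub>R b + t *\<^sub>R a = x + t *\<^sub>R a + t *\<^sub>R b" by (simp add: algebra_simps)
    have abs_diff: "\<bar>p - q\<bar> \<le> 2 * E" if "\<bar>D - p\<bar> \<le> E" "\<bar>D - q\<bar> \<le> E" for D p q E :: real
      using that by arith
    have "\<bar>t\<^sup>2 * (G b \<bullet> a) - t\<^sup>2 * (G a \<bullet> b)\<bar> \<le> 2 * (e / 2 * t\<^sup>2)"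
      using \<tau>1(2)[OF t(1,2)] \<tau>2(2)[OF t(1,3)] unfolding comm
      by (intro abs_diff[where D = "f (x + t *\<^sub>R a + t *\<^sub>R b) - f (x + t *\<^sub>R a) - f (x + t *\<^sub>R b) + f x"])
        (simp_all add: algebra_simps)
    moreover have "t\<^sup>2 * \<bar>G b \<bullet> a - G a \<bullet> b\<bar> = \<bar>t\<^sup>2 * (G b \<bullet> a) - t\<^sup>2 * (G a \<bullet> b)\<bar>"
      by (subst right_diff_distrib[symmetric]) (simp add: abs_mult)
    ultimately have "t\<^sup>2 * \<bar>G b \<bullet> a - G a \<bullet> b\<bar> \<le> t\<^sup>2 * e" by (simp add: mult.commute)
    then show ?thesis using t by simp
  qed
  then show ?thesis using field_le_epsilon[of "\<bar>G b \<bullet> a - G a \<bullet> b\<bar>" 0] by simp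
qed

lemma tendsto_continuous_linear_family:
  fixes H :: "'a::topological_space \<Rightarrow> 'b::euclidean_space \<Rightarrow> 'c::real_normed_vector"
  assumes lin: "\<And>x. x \<in> U \<Longrightarrow> linear (H x)" and cont: "\<And>d. continuous_on U (\<lambda>x. H x d)"
    and x: "x \<in> U" and xs: "xs \<longlonglongrightarrow> x" and ev: "eventually (\<lambda>k. xs k \<in> U) sequentially"
    and bs: "bs \<longlonglongrightarrow> b"
  shows "(\<lambda>k. H (xs k) (bs k)) \<longlonglongrightarrow> H x b"
proof -
  have repr: "H y d = (\<Sum>i\<in>Basis. (d \<bullet> i) *\<^sub>R H y i)" if "y \<in> U" for y d
  proof -
    have "H y d = H y (\<Sum>i\<in>Basis. (d \<bullet> i) *\<^sub>R i)" by (simp only: euclidean_representation)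
    also have "\<dots> = (\<Sum>i\<in>Basis. (d \<bullet> i) *\<^sub>R H y i)"
      by (simp only: linear_sum[OF lin[OF that]] linear_scale[OF lin[OF that]])
    finally show ?thesis .
  qed
  have "(\<lambda>k. \<Sum>i\<in>Basis. (bs k \<bullet> i) *\<^sub>R H (xs k) i) \<longlonglongrightarrow> (\<Sum>i\<in>Basis. (b \<bullet> i) *\<^sub>R H x i)"
    by (intro tendsto_sum tendsto_scaleR tendsto_inner bs tendsto_const
        continuous_on_tendsto_compose[OF cont xs x ev])
  moreover have "eventually (\<lambda>k. (\<Sum>i\<in>Basis. (bs k \<bullet> i) *\<^sub>R H (xs k) i) = H (xs k) (bs k))
      sequentially"
    using ev by eventually_elim (rule repr[symmetric])
  ultimately have "(\<lambda>k. H (xs k) (bs k)) \<longlonglongrightarrow> (\<Sum>i\<in>Basis. (b \<bullet> i) *\<^sub>R H x i)"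
    by (rule Lim_transform_eventually)
  then show ?thesis by (subst repr[OF x])
qed

locale local_equations =
  fixes M :: "'a::euclidean_space set" and u :: 'a and U :: "'a set" and m :: nat
    and h :: "nat \<Rightarrow> 'a \<Rightarrow> real" and g :: "nat \<Rightarrow> 'a \<Rightarrow> 'a" and H :: "nat \<Rightarrow> 'a \<Rightarrow> 'a \<Rightarrow> 'a"
  assumes open_U: "open U" and u_in_U: "u \<in> U" and u_in_M: "u \<in> M"
    and h_deriv: "\<And>i x. i < m \<Longrightarrow> x \<in> U \<Longrightarrow> (h i has_derivative (\<lambda>d. g i x \<bullet> d)) (at x)"
    and g_deriv: "\<And>i x. i < m \<Longrightarrow> x \<in> U \<Longrightarrow> (g i has_derivative H i x) (at x)"
    and H_cont: "\<And>i d. i < m \<Longrightarrow> continuous_on U (\<lambda>x. H i x d)"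
    and M_local: "M \<inter> U = {x \<in> U. \<forall>i<m. h i x = 0}"
    and grad_inj: "inj_on (\<lambda>i. g i u) {..<m}"
    and grad_indep: "independent ((\<lambda>i. g i u) ` {..<m})"
begin

definition grad_comb :: "'a \<Rightarrow> (nat \<Rightarrow> real) \<Rightarrow> 'a" where
  "grad_comb x c = (\<Sum>i<m. c i *\<^sub>R g i x)"

definition hess_comb :: "'a \<Rightarrow> (nat \<Rightarrow> real) \<Rightarrow> 'a \<Rightarrow> 'a" where
  "hess_comb x c w = (\<Sum>i<m. c i *\<^sub>R H i x w)"

definition normal_subspace :: "'a \<Rightarrow> 'a set" where
  "normal_subspace x = span ((\<lambda>i. g i x) ` {..<m})"

definition tangent_subspace :: "'a \<Rightarrow> 'a set" where
  "tangent_subspace x = {w. \<forall>i<m. g i x \<bullet> w = 0}"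

lemma in_normal_subspace_iff:
  "y \<in> normal_subspace x \<longleftrightarrow> (\<forall>w\<in>tangent_subspace x. y \<bullet> w = 0)"
  unfolding normal_subspace_def tangent_subspace_def in_span_iff_orthogonal_annihilator by auto

lemma uminus_tangent_subspace: "w \<in> tangent_subspace x \<Longrightarrow> - w \<in> tangent_subspace x"
  by (simp add: tangent_subspace_def)

lemma normal_subspace_eq_range: "normal_subspace x = range (grad_comb x)"
proof
  show "range (grad_comb x) \<subseteq> normal_subspace x"
  proof clarify
    fix c show "grad_comb x c \<in> normal_subspace x"
      unfolding normal_subspace_def grad_comb_def by (intro span_sum span_scale span_base) auto
  qed
  have "subspace (range (grad_comb x))"
    unfolding subspace_def
  proof (intro conjI ballI allI)
    show "0 \<in> range (grad_comb x)"
      using rangeI[of "grad_comb x" "\<lambda>i. 0"] by (simp add: grad_comb_def)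
  next
    fix y z assume "y \<in> range (grad_comb x)" "z \<in> range (grad_comb x)"
    then obtain c d where "y = grad_comb x c" "z = grad_comb x d" by blast
    then show "y + z \<in> range (grad_comb x)"
      using rangeI[of "grad_comb x" "\<lambda>i. c i + d i"]
      by (simp add: grad_comb_def scaleR_add_left sum.distrib)
  next
    fix a y assume "y \<in> range (grad_comb x)"
    then obtain c where "y = grad_comb x c" by blast
    then show "a *\<^sub>R y \<in> range (grad_comb x)"
      using rangeI[of "grad_comb x" "\<lambda>i. a * c i"] by (simp add: grad_comb_def scaleR_sum_right)
  qed
  moreover have "g i x \<in> range (grad_comb x)" if "i < m" for i
  proof -
    have "grad_comb x (\<lambda>j. if j = i then 1 else 0) = (\<Sum>j<m. if j = i then g j x else 0)"
      unfolding grad_comb_def by (intro sum.cong) auto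
    also have "\<dots> = g i x" using that by simp
    finally show ?thesis by (metis rangeI)
  qed
  ultimately show "normal_subspace x \<subseteq> range (grad_comb x)"
    unfolding normal_subspace_def by (intro span_minimal) auto
qed

lemma grad_comb_in_normal_subspace: "grad_comb x c \<in> normal_subspace x"
  by (simp add: normal_subspace_eq_range)

lemma H_linear: "i < m \<Longrightarrow> x \<in> U \<Longrightarrow> linear (H i x)"
  using g_deriv has_derivative_linear by blast

lemma grad_comb_has_derivative:
  "x \<in> U \<Longrightarrow> ((\<lambda>y. grad_comb y c) has_derivative hess_comb x c) (at x)"
  unfolding grad_comb_def[abs_def] hess_comb_def[abs_def]
  by (intro has_derivative_sum has_derivative_scaleR_right g_deriv) auto

lemma hess_comb_linear: "x \<in> U \<Longrightarrow> linear (hess_comb x c)"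
  using grad_comb_has_derivative has_derivative_linear by blast

lemma hess_comb_symmetric:
  assumes "x \<in> U"
  shows "hess_comb x c a \<bullet> b = hess_comb x c b \<bullet> a"
proof -
  have "H i x a \<bullet> b = H i x b \<bullet> a" if "i < m" for i
    using gradient_derivative_symmetric[OF open_U assms h_deriv[OF that] g_deriv[OF that assms]] .
  then show ?thesis unfolding hess_comb_def inner_sum_left by (intro sum.cong) auto
qed

lemma tangent_cone_subset_tangent_subspace:
  assumes x: "x \<in> M" "x \<in> U"
  shows "tangent_cone M x \<subseteq> tangent_subspace x"
proof
  fix w assume "w \<in> tangent_cone M x"
  then obtain t ws where t_pos: "\<And>k. 0 < t k" and t0: "t \<longlonglongrightarrow> 0" and ws: "ws \<longlonglongrightarrow> w"
    and in_M: "\<And>k. x + t k *\<^sub>R ws k \<in> M"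
    unfolding tangent_cone_def by blast
  have "(\<lambda>k. x + t k *\<^sub>R ws k) \<longlonglongrightarrow> x"
    using tendsto_add[OF tendsto_const tendsto_scaleR[OF t0 ws], of x] by simp
  then have ev_U: "eventually (\<lambda>k. x + t k *\<^sub>R ws k \<in> U) sequentially"
    by (rule topological_tendstoD[OF _ open_U x(2)])
  have h_zero: "h i y = 0" if "y \<in> M" "y \<in> U" "i < m" for i y
    using M_local that by blast
  show "w \<in> tangent_subspace x"
    unfolding tangent_subspace_def
  proof (intro CollectI allI impI)
    fix i assume i: "i < m"
    have "(\<lambda>k. (h i (x + t k *\<^sub>R ws k) - h i x) /\<^sub>R t k) \<longlonglongrightarrow> g i x \<bullet> w"
      by (rule has_derivative_difference_quotient_tendsto[OF h_deriv[OF i x(2)] t_pos t0 ws])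
    moreover have "eventually (\<lambda>k. (h i (x + t k *\<^sub>R ws k) - h i x) /\<^sub>R t k = 0) sequentially"
      using ev_U by eventually_elim (simp add: h_zero[OF in_M _ i] h_zero[OF x i])
    ultimately have "(\<lambda>k. 0) \<longlonglongrightarrow> g i x \<bullet> w" by (rule Lim_transform_eventually)
    then have "0 = g i x \<bullet> w" by (rule LIMSEQ_unique[OF tendsto_const])
    then show "g i x \<bullet> w = 0" by simp
  qed
qed

lemma tangent_subspace_limit:
  assumes x: "x \<in> U" and xs: "xs \<longlonglongrightarrow> x" and bs: "bs \<longlonglongrightarrow> b"
    and ev: "eventually (\<lambda>k. bs k \<in> tangent_subspace (xs k)) sequentially"
  shows "b \<in> tangent_subspace x"
  unfolding tangent_subspace_def
proof (intro CollectI allI impI)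
  fix i assume i: "i < m"
  have "isCont (g i) x" using g_deriv[OF i x] by (rule has_derivative_continuous)
  then have "(\<lambda>k. g i (xs k) \<bullet> bs k) \<longlonglongrightarrow> g i x \<bullet> b"
    by (intro tendsto_inner bs isCont_tendsto_compose[OF _ xs])
  moreover have "eventually (\<lambda>k. g i (xs k) \<bullet> bs k = 0) sequentially"
    using ev by eventually_elim (simp add: tangent_subspace_def i)
  ultimately have "(\<lambda>k. 0) \<longlonglongrightarrow> g i x \<bullet> b" by (rule Lim_transform_eventually)
  then have "0 = g i x \<bullet> b" by (rule LIMSEQ_unique[OF tendsto_const])
  then show "g i x \<bullet> b = 0" by simp
qed

lemma hess_comb_tendsto:
  assumes x: "x \<in> U" and xs: "xs \<longlonglongrightarrow> x" and ev: "eventually (\<lambda>k. xs k \<in> U) sequentially"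
    and cs: "\<And>i. i < m \<Longrightarrow> (\<lambda>k. cs k i) \<longlonglongrightarrow> c i" and bs: "bs \<longlonglongrightarrow> b"
  shows "(\<lambda>k. hess_comb (xs k) (cs k) (bs k)) \<longlonglongrightarrow> hess_comb x c b"
  unfolding hess_comb_def
  by (intro tendsto_sum tendsto_scaleR cs
      tendsto_continuous_linear_family[OF H_linear H_cont x xs ev bs]) auto

lemma exists_coefficient_bound_ball:
  obtains r C where "r > 0" "C > 0" "ball u r \<subseteq> U"
    "\<And>x c. x \<in> ball u r \<Longrightarrow> (\<Sum>i<m. \<bar>c i\<bar>) \<le> C * norm (grad_comb x c)"
proof -
  have "isCont (g i) u" if "i < m" for i
    using g_deriv[OF that u_in_U] by (rule has_derivative_continuous)
  then obtain r0 C where r0: "r0 > 0" "C > 0"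
    and bound: "\<And>x c. x \<in> ball u r0 \<Longrightarrow> (\<Sum>i<m. \<bar>c i\<bar>) \<le> C * norm (\<Sum>i<m. c i *\<^sub>R g i x)"
    using independent_coefficients_bound_near[where g = g and u = u, OF grad_inj grad_indep]
    by blast
  obtain r1 where r1: "r1 > 0" "ball u r1 \<subseteq> U"
    using open_contains_ball u_in_U open_U by blast
  show thesis
  proof (rule that[of "min r0 r1" C])
    show "ball u (min r0 r1) \<subseteq> U" using r1(2) by auto
    show "(\<Sum>i<m. \<bar>c i\<bar>) \<le> C * norm (grad_comb x c)" if "x \<in> ball u (min r0 r1)" for x c
      unfolding grad_comb_def using that by (intro bound) auto
  qed (use r0 r1 in auto)
qed

end

locale local_equations_ball = local_equations +
  fixes r C :: real
  assumes C_pos: "C > 0" and ball_subset: "ball u r \<subseteq> U"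
    and coeff_bound: "\<And>x c. x \<in> ball u r \<Longrightarrow> (\<Sum>i<m. \<bar>c i\<bar>) \<le> C * norm (grad_comb x c)"
begin

lemma in_U_if_in_ball: "x \<in> ball u r \<Longrightarrow> x \<in> U"
  using ball_subset by blast

lemma in_M_if_grad_comb_orthogonal:
  assumes x: "x \<in> ball u r" and p: "p \<in> U"
    and orth: "\<And>y. y \<in> normal_subspace x \<Longrightarrow> y \<bullet> grad_comb x (\<lambda>i. h i p) = 0"
  shows "p \<in> M"
proof -
  have "grad_comb x (\<lambda>i. h i p) = 0"
    using orth[OF grad_comb_in_normal_subspace[of x "\<lambda>i. h i p"]] by simp
  then have sum0: "(\<Sum>i<m. \<bar>h i p\<bar>) \<le> 0" using coeff_bound[OF x, of "\<lambda>i. h i p"] by simp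
  have "h i p = 0" if "i < m" for i
  proof -
    have "\<bar>h i p\<bar> \<le> (\<Sum>i<m. \<bar>h i p\<bar>)" using that by (intro member_le_sum) auto
    then show ?thesis using sum0 by simp
  qed
  then show ?thesis using M_local p by blast
qed

lemma tangent_subspace_subset_tangent_cone:
  assumes x: "x \<in> M" "x \<in> ball u r"
  shows "tangent_subspace x \<subseteq> tangent_cone (M \<inter> ball u r) x"
proof
  fix a assume a: "a \<in> tangent_subspace x"
  have xU: "x \<in> U" using x(2) by (rule in_U_if_in_ball)
  obtain P where P: "linear P" "\<And>d. P d \<in> normal_subspace x"
    "\<And>d y. y \<in> normal_subspace x \<Longrightarrow> y \<bullet> (d - P d) = 0"
    "\<And>d. (\<And>y. y \<in> (\<lambda>i. g i x) ` {..<m} \<Longrightarrow> y \<bullet> d = 0) \<Longrightarrow> P d = 0"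
    using orthogonal_projection_exists[of "(\<lambda>i. g i x) ` {..<m}"]
    unfolding normal_subspace_def by blast
  \<comment> \<open>F has an injective derivative at x that fixes tangent vectors, and F p \<in> \<real> a forces
    h p = 0, so the open mapping theorem produces points of M along the direction a.\<close>
  define F where "F p = grad_comb x (\<lambda>i. h i p) + ((p - x) - P (p - x))" for p
  define F' where "F' d = (\<Sum>i<m. (g i x \<bullet> d) *\<^sub>R g i x) + (d - P d)" for d
  have bl_P: "bounded_linear P" using P(1) by (simp add: linear_conv_bounded_linear)
  have dF: "(F has_derivative (\<lambda>d. (\<Sum>i<m. (g i p \<bullet> d) *\<^sub>R g i x) + (d - P d))) (at p)"
    if "p \<in> U" for p
    unfolding F_def[abs_def] grad_comb_def
    by (auto intro!: derivative_eq_intros h_deriv bounded_linear.has_derivative[OF bl_P] that)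
  have cont_F: "continuous_on (U \<inter> ball u r) F"
    by (intro continuous_at_imp_continuous_on ballI has_derivative_continuous[OF dF]) auto
  have "inj F'"
    unfolding F'_def[abs_def]
    by (rule inj_gram_plus_orthogonal_part[OF P(1-3)[unfolded normal_subspace_def]])
  moreover have "(F has_derivative F') (at x)" using dF[OF xU] unfolding F'_def[abs_def] .
  ultimately have "a \<in> tangent_cone {p \<in> U \<inter> ball u r. \<exists>t. F p = F x + t *\<^sub>R F' a} x"
    using x xU cont_F open_U by (intro tangent_cone_preimage_ray open_Int) auto
  moreover have "{p \<in> U \<inter> ball u r. \<exists>t. F p = F x + t *\<^sub>R F' a} \<subseteq> M \<inter> ball u r"
  proof (rule subsetI)
    fix p assume "p \<in> {p \<in> U \<inter> ball u r. \<exists>t. F p = F x + t *\<^sub>R F' a}"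
    then obtain t where p: "p \<in> U" "p \<in> ball u r" and Fp: "F p = F x + t *\<^sub>R F' a" by blast
    have "\<forall>i<m. h i x = 0" using M_local x(1) xU by blast
    then have "F x = 0" unfolding F_def grad_comb_def by (simp add: linear_0[OF P(1)])
    moreover have "F' a = a"
      using a P(4)[of a] unfolding F'_def tangent_subspace_def by auto
    ultimately have "grad_comb x (\<lambda>i. h i p) = t *\<^sub>R a - ((p - x) - P (p - x))"
      using Fp by (simp add: F_def algebra_simps)
    moreover have "y \<bullet> (t *\<^sub>R a - ((p - x) - P (p - x))) = 0" if "y \<in> normal_subspace x" for y
      using that a P(3)[OF that] by (simp add: in_normal_subspace_iff inner_diff_right)
    ultimately have "p \<in> M" using in_M_if_grad_comb_orthogonal[OF x(2) p(1)] by simp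
    with p(2) show "p \<in> M \<inter> ball u r" by blast
  qed
  ultimately show "a \<in> tangent_cone (M \<inter> ball u r) x"
    using tangent_cone_mono by blast
qed

lemma tangent_cone_eq_tangent_subspace:
  assumes "x \<in> M" "x \<in> ball u r"
  shows "tangent_cone M x = tangent_subspace x"
proof
  show "tangent_cone M x \<subseteq> tangent_subspace x"
    using tangent_cone_subset_tangent_subspace assms in_U_if_in_ball by blast
  show "tangent_subspace x \<subseteq> tangent_cone M x"
    using tangent_subspace_subset_tangent_cone[OF assms] tangent_cone_mono[of "M \<inter> ball u r" M]
    by blast
qed

lemma normal_map_eq_normal_subspace:
  assumes "x \<in> M" "x \<in> ball u r"
  shows "normal_map M x = normal_subspace x"
  using assms by (auto simp: normal_map_def tangent_cone_eq_tangent_subspace in_normal_subspace_iff)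

lemma graph_normal_map_iff:
  assumes "x \<in> ball u r"
  shows "(x, y) \<in> graph_of (normal_map M) \<longleftrightarrow> x \<in> M \<and> y \<in> normal_subspace x"
proof (cases "x \<in> M")
  case True
  then show ?thesis using normal_map_eq_normal_subspace[OF True assms] by (simp add: graph_of_def)
next
  case False
  then show ?thesis by (simp add: graph_of_def normal_map_def)
qed


lemma grad_comb_inner_tangent_bound:
  assumes y: "y \<in> ball u r" and e: "e \<in> tangent_subspace x"
  shows "\<bar>grad_comb y c \<bullet> e\<bar> \<le> C * norm (grad_comb y c) * norm e * (\<Sum>i<m. norm (g i y - g i x))"
proof -
  let ?\<gamma> = "\<Sum>i<m. norm (g i y - g i x)"
  have "grad_comb y c \<bullet> e = (\<Sum>i<m. c i * ((g i y - g i x) \<bullet> e))"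
    using e unfolding grad_comb_def tangent_subspace_def inner_sum_left
    by (intro sum.cong) (auto simp: inner_diff_left)
  then have "\<bar>grad_comb y c \<bullet> e\<bar> \<le> (\<Sum>i<m. \<bar>c i\<bar> * (norm (g i y - g i x) * norm e))"
    by (auto intro!: order_trans[OF sum_abs] sum_mono simp: abs_mult mult_left_mono Cauchy_Schwarz_ineq2)
  also have "\<dots> \<le> (\<Sum>i<m. \<bar>c i\<bar> * (?\<gamma> * norm e))"
  proof (rule sum_mono)
    fix i assume "i \<in> {..<m}"
    then have "norm (g i y - g i x) \<le> ?\<gamma>" by (intro member_le_sum) auto
    then show "\<bar>c i\<bar> * (norm (g i y - g i x) * norm e) \<le> \<bar>c i\<bar> * (?\<gamma> * norm e)"
      by (intro mult_left_mono mult_right_mono) auto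
  qed
  also have "\<dots> = (\<Sum>i<m. \<bar>c i\<bar>) * (?\<gamma> * norm e)" by (rule sum_distrib_right[symmetric])
  also have "\<dots> \<le> C * norm (grad_comb y c) * (?\<gamma> * norm e)"
    by (intro mult_right_mono coeff_bound y) (simp add: sum_nonneg)
  finally show ?thesis by (simp add: mult_ac)
qed

lemma normal_subspace_limit:
  assumes x: "x \<in> ball u r" and xs: "xs \<longlonglongrightarrow> x" and ys: "ys \<longlonglongrightarrow> y"
    and ev: "eventually (\<lambda>k. xs k \<in> ball u r \<and> ys k \<in> normal_subspace (xs k)) sequentially"
  shows "y \<in> normal_subspace x"
  unfolding in_normal_subspace_iff
proof
  fix e assume e: "e \<in> tangent_subspace x"
  define \<gamma> where "\<gamma> k = (\<Sum>i<m. norm (g i (xs k) - g i x))" for k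
  have "\<gamma> \<longlonglongrightarrow> 0"
    unfolding \<gamma>_def
  proof (rule tendsto_null_sum)
    fix i assume "i \<in> {..<m}"
    then have "isCont (g i) x" using g_deriv in_U_if_in_ball[OF x] has_derivative_continuous by blast
    then have "(\<lambda>k. g i (xs k)) \<longlonglongrightarrow> g i x" by (rule isCont_tendsto_compose[OF _ xs])
    then show "(\<lambda>k. norm (g i (xs k) - g i x)) \<longlonglongrightarrow> 0" by (intro tendsto_norm_zero LIM_zero)
  qed
  then have lim0: "(\<lambda>k. C * (norm y + 1) * norm e * \<gamma> k) \<longlonglongrightarrow> 0"
    by (rule tendsto_mult_right_zero)
  have "eventually (\<lambda>k. norm (ys k) < norm y + 1) sequentially"
    using tendsto_norm[OF ys] by (rule order_tendstoD(2)) simp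
  with ev have "eventually (\<lambda>k. norm (ys k \<bullet> e) \<le> C * (norm y + 1) * norm e * \<gamma> k) sequentially"
  proof eventually_elim
    case (elim k)
    then obtain c where c: "ys k = grad_comb (xs k) c" by (auto simp: normal_subspace_eq_range)
    have "norm (ys k \<bullet> e) \<le> C * norm (ys k) * norm e * \<gamma> k"
      unfolding c \<gamma>_def real_norm_def using elim e by (intro grad_comb_inner_tangent_bound) auto
    also have "\<dots> \<le> C * (norm y + 1) * norm e * \<gamma> k"
      using elim C_pos by (intro mult_right_mono mult_left_mono) (auto simp: \<gamma>_def sum_nonneg)
    finally show ?case .
  qed
  then have "(\<lambda>k. ys k \<bullet> e) \<longlonglongrightarrow> 0" using lim0 by (rule Lim_null_comparison)
  moreover have "(\<lambda>k. ys k \<bullet> e) \<longlonglongrightarrow> y \<bullet> e" by (intro tendsto_inner ys tendsto_const)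
  ultimately show "y \<bullet> e = 0" by (rule LIMSEQ_unique[symmetric])
qed


lemma graph_tangentI:
  assumes x: "x \<in> M" "x \<in> ball u r" and w: "w \<in> tangent_subspace x"
    and n: "n \<in> normal_subspace x"
  shows "(w, hess_comb x c w + n) \<in> tangent_cone (graph_of (normal_map M)) (x, grad_comb x c)"
proof -
  have xU: "x \<in> U" using x(2) by (rule in_U_if_in_ball)
  obtain t ws where t_pos: "\<And>k. 0 < t k" and t0: "t \<longlonglongrightarrow> 0" and ws: "ws \<longlonglongrightarrow> w"
    and in_M: "\<And>k. x + t k *\<^sub>R ws k \<in> M \<inter> ball u r"
    using tangent_subspace_subset_tangent_cone[OF x] w unfolding tangent_cone_def by blast
  obtain \<mu> where n_eq: "n = grad_comb x \<mu>" using n by (auto simp: normal_subspace_eq_range)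
  define xs where "xs k = x + t k *\<^sub>R ws k" for k
  define zs where "zs k = (grad_comb (xs k) c - grad_comb x c) /\<^sub>R t k + grad_comb (xs k) \<mu>" for k
  have "xs \<longlonglongrightarrow> x"
    using tendsto_add[OF tendsto_const tendsto_scaleR[OF t0 ws], of x] by (simp add: xs_def[abs_def])
  then have "(\<lambda>k. grad_comb (xs k) \<mu>) \<longlonglongrightarrow> grad_comb x \<mu>"
    by (rule isCont_tendsto_compose[OF has_derivative_continuous[OF grad_comb_has_derivative[OF xU]]])
  moreover have "(\<lambda>k. (grad_comb (xs k) c - grad_comb x c) /\<^sub>R t k) \<longlonglongrightarrow> hess_comb x c w"
    unfolding xs_def
    by (rule has_derivative_difference_quotient_tendsto[OF grad_comb_has_derivative[OF xU] t_pos t0 ws])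
  ultimately have zs: "zs \<longlonglongrightarrow> hess_comb x c w + n"
    unfolding zs_def[abs_def] n_eq by (intro tendsto_add)
  have "(x, grad_comb x c) + t k *\<^sub>R (ws k, zs k) \<in> graph_of (normal_map M)" for k
  proof -
    have "grad_comb x c + t k *\<^sub>R zs k = grad_comb (xs k) c + t k *\<^sub>R grad_comb (xs k) \<mu>"
      using t_pos[of k] by (simp add: zs_def scaleR_add_right)
    also have "\<dots> = grad_comb (xs k) (\<lambda>i. c i + t k * \<mu> i)"
      by (simp add: grad_comb_def scaleR_sum_right scaleR_add_left sum.distrib)
    finally have "(x, grad_comb x c) + t k *\<^sub>R (ws k, zs k) = (xs k, grad_comb (xs k) (\<lambda>i. c i + t k * \<mu> i))"
      by (simp add: xs_def)
    moreover have "xs k \<in> M" "xs k \<in> ball u r" using in_M[of k] by (auto simp: xs_def)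
    ultimately show ?thesis by (simp add: graph_normal_map_iff grad_comb_in_normal_subspace)
  qed
  then show ?thesis
    unfolding tangent_cone_def using t_pos t0 tendsto_Pair[OF ws zs]
    by (intro CollectI exI[of _ t] exI[of _ "\<lambda>k. (ws k, zs k)"]) auto
qed

lemma graph_difference_quotient_in_normal_subspace:
  assumes "y \<in> ball u r" "t > 0"
    and "(y, grad_comb x c + t *\<^sub>R z) \<in> graph_of (normal_map M)"
  shows "z - (grad_comb y c - grad_comb x c) /\<^sub>R t \<in> normal_subspace y"
proof -
  have "grad_comb x c + t *\<^sub>R z \<in> normal_subspace y"
    using assms(3) graph_normal_map_iff[OF assms(1)] by blast
  then have "(grad_comb x c + t *\<^sub>R z - grad_comb y c) /\<^sub>R t \<in> normal_subspace y"
    unfolding normal_subspace_def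
    by (intro span_scale span_diff) (auto simp: grad_comb_in_normal_subspace[unfolded normal_subspace_def])
  moreover have "(grad_comb x c + t *\<^sub>R z - grad_comb y c) /\<^sub>R t
      = z - (grad_comb y c - grad_comb x c) /\<^sub>R t"
    using assms(2) by (simp add: algebra_simps)
  ultimately show ?thesis by simp
qed

lemma graph_tangentD:
  assumes x: "x \<in> M" "x \<in> ball u r"
    and wz: "(w, z) \<in> tangent_cone (graph_of (normal_map M)) (x, grad_comb x c)"
  shows "w \<in> tangent_subspace x" "z - hess_comb x c w \<in> normal_subspace x"
proof -
  have xU: "x \<in> U" using x(2) by (rule in_U_if_in_ball)
  obtain t ps where t_pos: "\<And>k. 0 < t k" and t0: "t \<longlonglongrightarrow> 0" and ps: "ps \<longlonglongrightarrow> (w, z)"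
    and in_graph: "\<And>k. (x, grad_comb x c) + t k *\<^sub>R ps k \<in> graph_of (normal_map M)"
    using wz unfolding tangent_cone_def by blast
  define ws where "ws k = fst (ps k)" for k
  define zs where "zs k = snd (ps k)" for k
  define xs where "xs k = x + t k *\<^sub>R ws k" for k
  have ws: "ws \<longlonglongrightarrow> w" using tendsto_fst[OF ps] by (simp add: ws_def[abs_def])
  have zs: "zs \<longlonglongrightarrow> z" using tendsto_snd[OF ps] by (simp add: zs_def[abs_def])
  have graph_k: "(xs k, grad_comb x c + t k *\<^sub>R zs k) \<in> graph_of (normal_map M)" for k
  proof -
    have "(x, grad_comb x c) + t k *\<^sub>R ps k = (xs k, grad_comb x c + t k *\<^sub>R zs k)"
      by (simp add: xs_def ws_def zs_def prod_eq_iff)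
    then show ?thesis using in_graph[of k] by simp
  qed
  have "xs k \<in> M" for k
    using graph_k[of k] by (auto simp: graph_of_def normal_map_def split: if_splits)
  then have "w \<in> tangent_cone M x"
    unfolding tangent_cone_def xs_def using t_pos t0 ws by blast
  then show w_tan: "w \<in> tangent_subspace x"
    using tangent_cone_subset_tangent_subspace[OF x(1) xU] by blast
  have "xs \<longlonglongrightarrow> x"
    using tendsto_add[OF tendsto_const tendsto_scaleR[OF t0 ws], of x] by (simp add: xs_def[abs_def])
  moreover have "(\<lambda>k. zs k - (grad_comb (xs k) c - grad_comb x c) /\<^sub>R t k)
      \<longlonglongrightarrow> z - hess_comb x c w"
    unfolding xs_def using grad_comb_has_derivative[OF xU]
    by (intro tendsto_diff zs has_derivative_difference_quotient_tendsto[OF _ t_pos t0 ws])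
  moreover have "eventually (\<lambda>k. xs k \<in> ball u r) sequentially"
    using \<open>xs \<longlonglongrightarrow> x\<close> open_ball x(2) by (rule topological_tendstoD)
  then have "eventually (\<lambda>k. xs k \<in> ball u r \<and>
      zs k - (grad_comb (xs k) c - grad_comb x c) /\<^sub>R t k \<in> normal_subspace (xs k)) sequentially"
    by eventually_elim (use graph_difference_quotient_in_normal_subspace t_pos graph_k in blast)
  ultimately show "z - hess_comb x c w \<in> normal_subspace x"
    by (intro normal_subspace_limit[OF x(2)])
qed

lemma graph_regular_normalD:
  assumes x: "x \<in> M" "x \<in> ball u r"
    and reg: "(\<alpha>, \<beta>) \<in> regular_normal_cone (graph_of (normal_map M)) (x, grad_comb x c)"
  shows "\<beta> \<in> tangent_subspace x" "\<alpha> + hess_comb x c \<beta> \<in> normal_subspace x"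
proof -
  have xU: "x \<in> U" using x(2) by (rule in_U_if_in_ball)
  have lin: "linear (hess_comb x c)" by (rule hess_comb_linear[OF xU])
  \<comment> \<open>The tangent cone of the graph is a subspace, so regular normals are orthogonal to it.\<close>
  have orth: "\<alpha> \<bullet> w + \<beta> \<bullet> (hess_comb x c w + n) = 0"
    if w: "w \<in> tangent_subspace x" and n: "n \<in> normal_subspace x" for w n
  proof -
    have "- w \<in> tangent_subspace x" using w by (rule uminus_tangent_subspace)
    moreover have "- n \<in> normal_subspace x" using n by (simp add: normal_subspace_def span_neg)
    ultimately have "(\<alpha>, \<beta>) \<bullet> (- w, hess_comb x c (- w) + - n) \<le> 0"
      by (intro regular_normal_cone_inner_tangent_nonpos[OF reg] graph_tangentI[OF x])
    moreover have "(\<alpha>, \<beta>) \<bullet> (w, hess_comb x c w + n) \<le> 0"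
      by (intro regular_normal_cone_inner_tangent_nonpos[OF reg] graph_tangentI[OF x w n])
    ultimately have "- (\<alpha> \<bullet> w + \<beta> \<bullet> (hess_comb x c w + n)) \<le> 0"
      "\<alpha> \<bullet> w + \<beta> \<bullet> (hess_comb x c w + n) \<le> 0"
      by (simp_all add: inner_Pair linear_neg[OF lin] inner_add_right inner_diff_right)
    then show ?thesis by linarith
  qed
  have zero: "0 \<in> normal_subspace x" unfolding normal_subspace_def by (rule span_zero)
  show "\<beta> \<in> tangent_subspace x"
    unfolding tangent_subspace_def
  proof (intro CollectI allI impI)
    fix i assume "i < m"
    then have "g i x \<in> normal_subspace x" unfolding normal_subspace_def by (intro span_base) auto
    from orth[OF _ this, of 0] show "g i x \<bullet> \<beta> = 0"
      by (simp add: tangent_subspace_def linear_0[OF lin] inner_commute)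
  qed
  show "\<alpha> + hess_comb x c \<beta> \<in> normal_subspace x"
    unfolding in_normal_subspace_iff
  proof
    fix w assume w: "w \<in> tangent_subspace x"
    have "(\<alpha> + hess_comb x c \<beta>) \<bullet> w = \<alpha> \<bullet> w + hess_comb x c w \<bullet> \<beta>"
      using hess_comb_symmetric[OF xU, of c \<beta> w] by (simp add: inner_add_left)
    also have "\<dots> = \<alpha> \<bullet> w + \<beta> \<bullet> (hess_comb x c w + 0)" by (simp add: inner_commute)
    also have "\<dots> = 0" by (rule orth[OF w zero])
    finally show "(\<alpha> + hess_comb x c \<beta>) \<bullet> w = 0" .
  qed
qed

lemma graph_regular_normalI:
  assumes x: "x \<in> M" "x \<in> ball u r"
    and \<beta>: "\<beta> \<in> tangent_subspace x" and \<alpha>: "\<alpha> + hess_comb x c \<beta> \<in> normal_subspace x"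
  shows "(\<alpha>, \<beta>) \<in> regular_normal_cone (graph_of (normal_map M)) (x, grad_comb x c)"
proof (rule regular_normal_coneI)
  have xU: "x \<in> U" using x(2) by (rule in_U_if_in_ball)
  show "(x, grad_comb x c) \<in> graph_of (normal_map M)"
    using x by (simp add: graph_normal_map_iff grad_comb_in_normal_subspace)
  fix \<tau> assume "\<tau> \<in> tangent_cone (graph_of (normal_map M)) (x, grad_comb x c)"
  moreover obtain w z where \<tau>: "\<tau> = (w, z)" by fastforce
  ultimately have w: "w \<in> tangent_subspace x" and z: "z - hess_comb x c w \<in> normal_subspace x"
    using graph_tangentD[OF x] by auto
  have "(\<alpha>, \<beta>) \<bullet> \<tau> = (\<alpha> + hess_comb x c \<beta>) \<bullet> w + (z - hess_comb x c w) \<bullet> \<beta>"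
    using hess_comb_symmetric[OF xU, of c \<beta> w]
    by (simp add: \<tau> inner_Pair inner_add_left inner_diff_left inner_commute[of \<beta> z])
  also have "\<dots> = 0"
    using \<alpha> \<beta> w z by (simp add: in_normal_subspace_iff)
  finally show "(\<alpha>, \<beta>) \<bullet> \<tau> \<le> 0" by simp
qed

lemma graph_regular_normal_iff:
  assumes "x \<in> M" "x \<in> ball u r"
  shows "(\<alpha>, \<beta>) \<in> regular_normal_cone (graph_of (normal_map M)) (x, grad_comb x c) \<longleftrightarrow>
    \<beta> \<in> tangent_subspace x \<and> \<alpha> + hess_comb x c \<beta> \<in> normal_subspace x"
  using graph_regular_normalD[OF assms] graph_regular_normalI[OF assms] by blast


lemma coefficients_tendsto:
  assumes x: "x \<in> ball u r" and xs: "xs \<longlonglongrightarrow> x"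
    and ev: "eventually (\<lambda>k. xs k \<in> ball u r) sequentially"
    and lim: "(\<lambda>k. grad_comb (xs k) (cs k)) \<longlonglongrightarrow> grad_comb x c" and i: "i < m"
  shows "(\<lambda>k. cs k i) \<longlonglongrightarrow> c i"
proof -
  have "(\<lambda>k. grad_comb (xs k) c) \<longlonglongrightarrow> grad_comb x c"
    using has_derivative_continuous[OF grad_comb_has_derivative[OF in_U_if_in_ball[OF x]]]
    by (rule isCont_tendsto_compose[OF _ xs])
  from tendsto_diff[OF lim this]
  have "(\<lambda>k. grad_comb (xs k) (cs k) - grad_comb (xs k) c) \<longlonglongrightarrow> 0" by simp
  then have lim0: "(\<lambda>k. C * norm (grad_comb (xs k) (cs k) - grad_comb (xs k) c)) \<longlonglongrightarrow> 0"
    by (intro tendsto_mult_right_zero tendsto_norm_zero)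
  have "eventually (\<lambda>k. norm (cs k i - c i)
      \<le> C * norm (grad_comb (xs k) (cs k) - grad_comb (xs k) c)) sequentially"
    using ev
  proof eventually_elim
    case (elim k)
    have "norm (cs k i - c i) \<le> (\<Sum>j<m. \<bar>cs k j - c j\<bar>)"
      using i by (simp only: real_norm_def) (rule member_le_sum, auto)
    also have "\<dots> \<le> C * norm (grad_comb (xs k) (\<lambda>j. cs k j - c j))" by (rule coeff_bound[OF elim])
    also have "\<dots> = C * norm (grad_comb (xs k) (cs k) - grad_comb (xs k) c)"
      by (simp add: grad_comb_def scaleR_diff_left sum_subtractf)
    finally show ?case .
  qed
  then have "(\<lambda>k. cs k i - c i) \<longlonglongrightarrow> 0" using lim0 by (rule Lim_null_comparison)
  then show ?thesis by (rule LIM_zero_cancel)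
qed

lemma regular_normal_data_limit:
  assumes x: "x \<in> ball u r" and xs: "xs \<longlonglongrightarrow> x"
    and ev_ball: "eventually (\<lambda>k. xs k \<in> ball u r) sequentially"
    and lim: "(\<lambda>k. grad_comb (xs k) (cs k)) \<longlonglongrightarrow> grad_comb x c"
    and \<alpha>s: "\<alpha>s \<longlonglongrightarrow> \<alpha>" and \<beta>s: "\<beta>s \<longlonglongrightarrow> \<beta>"
    and ev: "eventually (\<lambda>k. \<beta>s k \<in> tangent_subspace (xs k)
      \<and> \<alpha>s k + hess_comb (xs k) (cs k) (\<beta>s k) \<in> normal_subspace (xs k)) sequentially"
  shows "\<beta> \<in> tangent_subspace x" "\<alpha> + hess_comb x c \<beta> \<in> normal_subspace x"
proof -
  have xU: "x \<in> U" using x by (rule in_U_if_in_ball)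
  have "eventually (\<lambda>k. \<beta>s k \<in> tangent_subspace (xs k)) sequentially"
    using ev by eventually_elim simp
  then show "\<beta> \<in> tangent_subspace x" by (rule tangent_subspace_limit[OF xU xs \<beta>s])
  have cs: "(\<lambda>k. cs k i) \<longlonglongrightarrow> c i" if "i < m" for i
    by (rule coefficients_tendsto[OF x xs ev_ball lim that])
  have ev_U: "eventually (\<lambda>k. xs k \<in> U) sequentially"
    using ev_ball by eventually_elim (rule in_U_if_in_ball)
  have "(\<lambda>k. \<alpha>s k + hess_comb (xs k) (cs k) (\<beta>s k)) \<longlonglongrightarrow> \<alpha> + hess_comb x c \<beta>"
    by (intro tendsto_add \<alpha>s hess_comb_tendsto[OF xU xs ev_U cs \<beta>s])
  moreover have "eventually (\<lambda>k. xs k \<in> ball u r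
      \<and> \<alpha>s k + hess_comb (xs k) (cs k) (\<beta>s k) \<in> normal_subspace (xs k)) sequentially"
    using ev_ball ev by eventually_elim simp
  ultimately show "\<alpha> + hess_comb x c \<beta> \<in> normal_subspace x"
    by (rule normal_subspace_limit[OF x xs])
qed

lemma graph_limiting_normal_subset_regular:
  assumes x: "x \<in> M" "x \<in> ball u r"
  shows "limiting_normal_cone (graph_of (normal_map M)) (x, grad_comb x c)
    \<subseteq> regular_normal_cone (graph_of (normal_map M)) (x, grad_comb x c)"
proof clarify
  fix \<alpha> \<beta> assume "(\<alpha>, \<beta>) \<in> limiting_normal_cone (graph_of (normal_map M)) (x, grad_comb x c)"
  then obtain ps ns where in_graph: "\<And>k. ps k \<in> graph_of (normal_map M)"
    and ps: "ps \<longlonglongrightarrow> (x, grad_comb x c)" and ns: "ns \<longlonglongrightarrow> (\<alpha>, \<beta>)"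
    and reg: "\<And>k. ns k \<in> regular_normal_cone (graph_of (normal_map M)) (ps k)"
    unfolding limiting_normal_cone_def by (auto split: if_splits)
  define xs ys \<alpha>s \<beta>s where "xs = fst \<circ> ps" and "ys = snd \<circ> ps" and "\<alpha>s = fst \<circ> ns"
    and "\<beta>s = snd \<circ> ns"
  have ps_k: "ps k = (xs k, ys k)" and ns_k: "ns k = (\<alpha>s k, \<beta>s k)" for k
    by (simp_all add: xs_def ys_def \<alpha>s_def \<beta>s_def)
  have xs: "xs \<longlonglongrightarrow> x" and ys: "ys \<longlonglongrightarrow> grad_comb x c"
    and \<alpha>s: "\<alpha>s \<longlonglongrightarrow> \<alpha>" and \<beta>s: "\<beta>s \<longlonglongrightarrow> \<beta>"
    using tendsto_fst[OF ps] tendsto_snd[OF ps] tendsto_fst[OF ns] tendsto_snd[OF ns]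
    by (simp_all add: xs_def ys_def \<alpha>s_def \<beta>s_def o_def)
  have ev_ball: "eventually (\<lambda>k. xs k \<in> ball u r) sequentially"
    using xs open_ball x(2) by (rule topological_tendstoD)
  have in_M: "xs k \<in> M" and ys_k: "ys k \<in> normal_subspace (xs k)" if "xs k \<in> ball u r" for k
    using in_graph[of k] graph_normal_map_iff[OF that] by (simp_all add: ps_k)
  define cs where "cs k = (SOME c'. ys k = grad_comb (xs k) c')" for k
  have ys_eq: "ys k = grad_comb (xs k) (cs k)" if k: "xs k \<in> ball u r" for k
  proof -
    obtain c' where "ys k = grad_comb (xs k) c'"
      using ys_k[OF k] by (auto simp: normal_subspace_eq_range)
    then show ?thesis
      unfolding cs_def by (rule someI[where P = "\<lambda>c'. ys k = grad_comb (xs k) c'"])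
  qed
  have "(\<lambda>k. grad_comb (xs k) (cs k)) \<longlonglongrightarrow> grad_comb x c"
  proof (rule Lim_transform_eventually[OF ys])
    show "eventually (\<lambda>k. ys k = grad_comb (xs k) (cs k)) sequentially"
      using ev_ball by eventually_elim (rule ys_eq)
  qed
  moreover have "eventually (\<lambda>k. \<beta>s k \<in> tangent_subspace (xs k)
      \<and> \<alpha>s k + hess_comb (xs k) (cs k) (\<beta>s k) \<in> normal_subspace (xs k)) sequentially"
    using ev_ball
  proof eventually_elim
    case (elim k)
    then show ?case
      using reg[of k] graph_regular_normal_iff[OF in_M[OF elim] elim] ys_eq[OF elim]
      by (simp add: ps_k ns_k)
  qed
  ultimately show "(\<alpha>, \<beta>) \<in> regular_normal_cone (graph_of (normal_map M)) (x, grad_comb x c)"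
    using regular_normal_data_limit[OF x(2) xs ev_ball _ \<alpha>s \<beta>s]
    by (simp add: graph_regular_normal_iff[OF x])
qed

lemma graph_limiting_normal_eq:
  assumes "x \<in> M" "x \<in> ball u r"
  shows "limiting_normal_cone (graph_of (normal_map M)) (x, grad_comb x c)
    = regular_normal_cone (graph_of (normal_map M)) (x, grad_comb x c)"
  using graph_limiting_normal_subset_regular[OF assms] regular_normal_cone_subset_limiting
  by (rule subset_antisym)

lemma graphical_derivative_eq_coderivative:
  assumes x: "x \<in> M" "x \<in> ball u r" and y: "y \<in> normal_map M x"
  shows "graphical_derivative (normal_map M) x y = coderivative (normal_map M) x y"
proof (intro ext set_eqI)
  fix w z
  obtain c where y_eq: "y = grad_comb x c"
    using y normal_map_eq_normal_subspace[OF x] by (auto simp: normal_subspace_eq_range)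
  have lin: "linear (hess_comb x c)" using hess_comb_linear in_U_if_in_ball[OF x(2)] by blast
  have "z \<in> graphical_derivative (normal_map M) x y w
    \<longleftrightarrow> w \<in> tangent_subspace x \<and> z - hess_comb x c w \<in> normal_subspace x"
    using graph_tangentI[OF x, of w "z - hess_comb x c w" c] graph_tangentD[OF x, of w z c]
    by (auto simp: graphical_derivative_def y_eq)
  also have "\<dots> \<longleftrightarrow> - w \<in> tangent_subspace x \<and> z + hess_comb x c (- w) \<in> normal_subspace x"
    using uminus_tangent_subspace[of w x] uminus_tangent_subspace[of "- w" x]
    by (auto simp: linear_neg[OF lin])
  also have "\<dots> \<longleftrightarrow> z \<in> coderivative (normal_map M) x y w"
    by (simp add: coderivative_def y_eq graph_limiting_normal_eq[OF x] graph_regular_normal_iff[OF x])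
  finally show "z \<in> graphical_derivative (normal_map M) x y w \<longleftrightarrow> z \<in> coderivative (normal_map M) x y w" .
qed

end

theorem theorem6p1:
  fixes M :: "'a::euclidean_space set" and u v :: 'a
  assumes "C2_manifold_around M u"
    and "v \<in> normal_map M u"
  shows "graphical_derivative (normal_map M) u v = coderivative (normal_map M) u v"
proof -
  obtain U :: "'a set" and m :: nat and h :: "nat \<Rightarrow> 'a \<Rightarrow> real" and g :: "nat \<Rightarrow> 'a \<Rightarrow> 'a"
    and H :: "nat \<Rightarrow> 'a \<Rightarrow> 'a \<Rightarrow> 'a" where "u \<in> M" "open U" "u \<in> U"
    and "\<forall>i<m. \<forall>x\<in>U. (h i has_derivative (\<lambda>d. g i x \<bullet> d)) (at x) \<and> (g i has_derivative H i x) (at x)"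
    and "\<forall>i<m. \<forall>d. continuous_on U (\<lambda>x. H i x d)" "M \<inter> U = {x \<in> U. \<forall>i<m. h i x = 0}"
    and "inj_on (\<lambda>i. g i u) {..<m}" "independent ((\<lambda>i. g i u) ` {..<m})"
    using assms(1) unfolding C2_manifold_around_def by blast
  then interpret local_equations M u U m h g H
    by unfold_locales auto
  obtain r C where "r > 0" "C > 0" "ball u r \<subseteq> U"
    "\<And>x c. x \<in> ball u r \<Longrightarrow> (\<Sum>i<m. \<bar>c i\<bar>) \<le> C * norm (grad_comb x c)"
    using exists_coefficient_bound_ball by blast
  then interpret local_equations_ball M u U m h g H r C
    by unfold_locales auto
  show ?thesis
    using graphical_derivative_eq_coderivative[OF u_in_M _ assms(2)] \<open>r > 0\<close> by simp
qed

end
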